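(* Let $G$ be the finite graph associated to a finite b-quad-graph and let $\alpha:E(G)\to(0,\pi)$ be an admissible labelling. Let $\mathscr C$ and $\mathscr C^*$ be two circle patterns for $G$ and $\alpha$ all of whose circles are contained in the unit disc $\mathbb D$, with hyperbolic radius functions $r_{\mathrm{hyp}}$ and $r^*_{\mathrm{hyp}}$. If $r^*_{\mathrm{hyp}}(v)\ge r_{\mathrm{hyp}}(v)$ holds for every boundary vertex $v$ of $G$, then it holds for all vertices of $G$.
   Context: A b-quad-graph is a strongly regular cell decomposition into quadrilaterals with bipartite 1-skeleton (white and black vertices); $G$ is the graph on white vertices, adjacent iff incident to a common face, so edges of $G$ correspond to faces. A labelling is admissible if at each interior black vertex the labels of incident faces sum to $2\pi$. A circle pattern for $G$ and $\alpha$ assigns to each $v\in V(G)$ a circle $\mathscr C(v)$ such that circles of adjacent vertices $v_1,v_2$ intersect with exterior intersection angle $\alpha([v_1,v_2])$ (angle at an intersection point between the radii to the two centers), the kites formed by the two centers and two intersection points being equally oriented and forming a pattern locally isomorphic to the b-quad-graph at interior vertices. For a circle contained in $\mathbb D$, its hyperbolic radius is its radius with respect to the Poincaré disc metric on $\mathbb D$. Boundary vertices of $G$ are the white vertices on the boundary of the cell decomposition. *)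

theory Defs
  imports Complex_Main
begin

text \<open>A finite b-quad-graph is given by a finite set F of (quadrilateral) faces and,
for each face f, its list of corners K f = [w1, b1, w2, b2] in the (coherent) cyclic
order of the oriented cell decomposition; positions 0 and 2 are white, 1 and 3 black.\<close>

definition dedges :: "('f \<Rightarrow> 'v list) \<Rightarrow> 'f \<Rightarrow> ('v \<times> 'v) set" where
  "dedges K f = {(K f ! i, K f ! ((i + 1) mod 4)) | i. i < 4}"

definition white_verts :: "'f set \<Rightarrow> ('f \<Rightarrow> 'v list) \<Rightarrow> 'v set" where
  "white_verts F K = {K f ! 0 | f. f \<in> F} \<union> {K f ! 2 | f. f \<in> F}"

definition black_verts :: "'f set \<Rightarrow> ('f \<Rightarrow> 'v list) \<Rightarrow> 'v set" where
  "black_verts F K = {K f ! 1 | f. f \<in> F} \<union> {K f ! 3 | f. f \<in> F}"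

definition adj_at :: "'f set \<Rightarrow> ('f \<Rightarrow> 'v list) \<Rightarrow> 'v \<Rightarrow> 'f \<Rightarrow> 'f \<Rightarrow> bool" where
  "adj_at F K v f g \<longleftrightarrow> f \<in> F \<and> g \<in> F \<and>
     (\<exists>x. ((v, x) \<in> dedges K f \<and> (x, v) \<in> dedges K g) \<or> ((x, v) \<in> dedges K f \<and> (v, x) \<in> dedges K g))"

definition adj :: "'f set \<Rightarrow> ('f \<Rightarrow> 'v list) \<Rightarrow> 'f \<Rightarrow> 'f \<Rightarrow> bool" where
  "adj F K f g \<longleftrightarrow> f \<in> F \<and> g \<in> F \<and> (\<exists>x y. (x, y) \<in> dedges K f \<and> (y, x) \<in> dedges K g)"

definition boundary_edge :: "'f set \<Rightarrow> ('f \<Rightarrow> 'v list) \<Rightarrow> 'v \<times> 'v \<Rightarrow> bool" where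
  "boundary_edge F K e \<longleftrightarrow> (\<exists>f\<in>F. e \<in> dedges K f) \<and> \<not> (\<exists>g\<in>F. prod.swap e \<in> dedges K g)"

definition boundary_verts :: "'f set \<Rightarrow> ('f \<Rightarrow> 'v list) \<Rightarrow> 'v set" where
  "boundary_verts F K = {v. \<exists>x. boundary_edge F K (v, x) \<or> boundary_edge F K (x, v)}"

definition interior_verts :: "'f set \<Rightarrow> ('f \<Rightarrow> 'v list) \<Rightarrow> 'v set" where
  "interior_verts F K = (\<Union>f\<in>F. set (K f)) - boundary_verts F K"

definition b_quad_graph :: "'f set \<Rightarrow> ('f \<Rightarrow> 'v list) \<Rightarrow> bool" where
  "b_quad_graph F K \<longleftrightarrow>
     finite F \<and>
     (\<forall>f\<in>F. length (K f) = 4 \<and> distinct (K f)) \<and>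
     \<comment> \<open>bipartite 1-skeleton (white/black)\<close>
     white_verts F K \<inter> black_verts F K = {} \<and>
     \<comment> \<open>coherent orientation; every edge lies in at most two faces\<close>
     (\<forall>f\<in>F. \<forall>g\<in>F. \<forall>e. e \<in> dedges K f \<and> e \<in> dedges K g \<longrightarrow> f = g) \<and>
     \<comment> \<open>strong regularity: two faces meet in nothing, a vertex, or a common edge\<close>
     (\<forall>f\<in>F. \<forall>g\<in>F. f \<noteq> g \<longrightarrow>
        card (set (K f) \<inter> set (K g)) \<le> 1 \<or>
        (\<exists>x y. set (K f) \<inter> set (K g) = {x, y} \<and> (x, y) \<in> dedges K f \<and> (y, x) \<in> dedges K g)) \<and>
     \<comment> \<open>manifold condition: the faces around each vertex form one fan\<close>
     (\<forall>v. \<forall>f\<in>F. \<forall>g\<in>F. v \<in> set (K f) \<and> v \<in> set (K g) \<longrightarrow> (adj_at F K v)\<^sup>*\<^sup>* f g) \<and>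
     \<comment> \<open>connected\<close>
     (\<forall>f\<in>F. \<forall>g\<in>F. (adj F K)\<^sup>*\<^sup>* f g) \<and>
     \<comment> \<open>finite decomposition of a planar domain: nonempty boundary\<close>
     boundary_verts F K \<noteq> {}"

text \<open>Admissible labelling of the edges of G (= faces) with values in (0, pi).\<close>
definition admissible :: "'f set \<Rightarrow> ('f \<Rightarrow> 'v list) \<Rightarrow> ('f \<Rightarrow> real) \<Rightarrow> bool" where
  "admissible F K \<alpha> \<longleftrightarrow>
     (\<forall>f\<in>F. 0 < \<alpha> f \<and> \<alpha> f < pi) \<and>
     (\<forall>b \<in> black_verts F K \<inter> interior_verts F K. (\<Sum>f\<in>{f\<in>F. b \<in> set (K f)}. \<alpha> f) = 2 * pi)"

text \<open>Angle of the kite of face f at the centre of the circle of the white corner at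
position i (i = 0 or 2): twice the angle at that centre in the triangle formed by the two
centres and an intersection point.\<close>
definition kite_angle :: "('f \<Rightarrow> 'v list) \<Rightarrow> ('v \<Rightarrow> complex) \<Rightarrow> ('v \<Rightarrow> complex) \<Rightarrow> 'f \<Rightarrow> nat \<Rightarrow> real" where
  "kite_angle K c p f i =
     2 * \<bar>Arg ((p (K f ! 1) - c (K f ! i)) / (c (K f ! ((i + 2) mod 4)) - c (K f ! i)))\<bar>"

text \<open>Circle pattern for (F,K) and alpha: circle with centre c w and radius r w for each white
vertex w, intersection points p b for black vertices b. For every face [w1,b1,w2,b2] the two
circles meet in the two points p b1, p b2 with exterior intersection angle alpha f (angle at
the intersection point between the radii to the centres); all kites (c w1, p b1, c w2, p b2)
have the same orientation s; and around each interior white vertex the kites fit together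
once (angle sum 2 pi), i.e. the pattern is locally isomorphic to the b-quad-graph (at interior
black vertices this follows from admissibility and equal orientation).\<close>
definition circle_pattern ::
  "'f set \<Rightarrow> ('f \<Rightarrow> 'v list) \<Rightarrow> ('f \<Rightarrow> real) \<Rightarrow> ('v \<Rightarrow> complex) \<Rightarrow> ('v \<Rightarrow> real) \<Rightarrow> ('v \<Rightarrow> complex) \<Rightarrow> bool" where
  "circle_pattern F K \<alpha> c r p \<longleftrightarrow>
     (\<forall>w\<in>white_verts F K. 0 < r w) \<and>
     (\<exists>s \<in> {1, -1::real}. \<forall>f\<in>F.
        (let w1 = K f ! 0; b1 = K f ! 1; w2 = K f ! 2; b2 = K f ! 3 in
           cmod (p b1 - c w1) = r w1 \<and> cmod (p b1 - c w2) = r w2 \<and>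
           cmod (p b2 - c w1) = r w1 \<and> cmod (p b2 - c w2) = r w2 \<and>
           p b1 \<noteq> p b2 \<and>
           (c w1 - p b1) / (c w2 - p b1) = complex_of_real (r w1 / r w2) * cis (s * \<alpha> f) \<and>
           (c w2 - p b2) / (c w1 - p b2) = complex_of_real (r w2 / r w1) * cis (s * \<alpha> f))) \<and>
     (\<forall>w \<in> white_verts F K \<inter> interior_verts F K.
        (\<Sum>f\<in>{f\<in>F. K f ! 0 = w}. kite_angle K c p f 0) +
        (\<Sum>f\<in>{f\<in>F. K f ! 2 = w}. kite_angle K c p f 2) = 2 * pi)"

text \<open>Poincare disc distance (metric 2|dz|/(1-|z|^2)).\<close>
definition hyp_dist :: "complex \<Rightarrow> complex \<Rightarrow> real" where
  "hyp_dist z w = 2 * artanh (cmod (z - w) / cmod (1 - cnj z * w))"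

definition hyp_radius :: "complex \<Rightarrow> real \<Rightarrow> real" where
  "hyp_radius c r = (THE \<rho>. \<exists>h. cmod h < 1 \<and>
      {z. cmod (z - c) = r} = {z. cmod z < 1 \<and> hyp_dist h z = \<rho>})"

end

(*
  A disc automorphism moving the hyperbolic centre of a circle to 0 turns it into a circle about 0
  of Euclidean radius t = tanh (rho / 2), where rho is its hyperbolic radius. Disc automorphisms
  preserve kites, and deforming the kites at an interior white vertex w along the automorphisms
  from the identity to the one centring the circle of w does not change their angle sum 2 pi.
  In the centred picture the kite angle at w is an explicit function theta (t_w, t_u, alpha) of
  the centred radii of the two circles: it decreases strictly in t_w, does not decrease in t_u,
  and theta (a, b) + theta (b, a) decreases strictly in both arguments.

  Maximum principle: the white vertices where the hyperbolic radius of the second pattern is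
  smaller form a set V of interior vertices. Summing the angle sums 2 pi over V for both patterns
  and regrouping by faces, every face meeting V contributes strictly more for the second pattern,
  a contradiction unless V is empty.
*)

theory Submission
  imports Defs "HOL-Complex_Analysis.Complex_Analysis"
begin

section \<open>Disc automorphisms and circles\<close>

abbreviation blaschke :: "complex \<Rightarrow> complex \<Rightarrow> complex" where
  "blaschke a \<equiv> Moebius_function 0 a"

lemma blaschke_eq: "blaschke a z = (z - a) / (1 - cnj a * z)"
  by (rule Moebius_function_simple)

lemma of_real_norm_power2: "(complex_of_real (cmod z))^2 = z * cnj z"
  using complex_norm_square[of z] by simp

lemma one_minus_cnj_mult_nonzero:
  assumes "cmod a < 1" "cmod z < 1"
  shows "1 - cnj a * z \<noteq> 0"
proof
  assume "1 - cnj a * z = 0"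
  then have "cmod (cnj a * z) = 1" by (metis eq_iff_diff_eq_0 norm_one)
  moreover have "cmod (cnj a * z) < 1" using assms
    by (simp add: norm_mult) (metis abs_ge_zero abs_norm_cancel less_one mult_strict_mono' norm_ge_zero mult_1_left)
  ultimately show False by simp
qed

lemma one_minus_cnj_mult_commute: "1 - cnj a * z \<noteq> 0 \<Longrightarrow> 1 - a * cnj z \<noteq> 0"
  by (metis complex_cnj_cnj complex_cnj_diff complex_cnj_mult complex_cnj_one complex_cnj_zero)

lemma cnj_blaschke: "cnj (blaschke a z) = (cnj z - cnj a) / (1 - a * cnj z)"
  by (simp add: blaschke_eq)

lemma blaschke_inverse: "cmod a < 1 \<Longrightarrow> cmod z < 1 \<Longrightarrow> blaschke (-a) (blaschke a z) = z"
  by (rule Moebius_function_compose) simp_all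

lemma blaschke_inj: "cmod a < 1 \<Longrightarrow> cmod z < 1 \<Longrightarrow> cmod z' < 1 \<Longrightarrow> blaschke a z = blaschke a z' \<Longrightarrow> z = z'"
  by (metis blaschke_inverse)

text \<open>The image of the circle with centre \<open>c\<close> and radius \<open>r\<close> under \<open>blaschke a\<close>.\<close>

definition blaschke_denom :: "complex \<Rightarrow> complex \<Rightarrow> real \<Rightarrow> real" where
  "blaschke_denom a c r = (cmod (1 - c * cnj a))^2 - r^2 * (cmod a)^2"

definition blaschke_centre :: "complex \<Rightarrow> complex \<Rightarrow> real \<Rightarrow> complex" where
  "blaschke_centre a c r = ((1 - cnj c * a) * (c - a) + of_real r ^ 2 * a) / of_real (blaschke_denom a c r)"

definition blaschke_radius :: "complex \<Rightarrow> complex \<Rightarrow> real \<Rightarrow> real" where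
  "blaschke_radius a c r = r * (1 - (cmod a)^2) / blaschke_denom a c r"

lemma blaschke_denom_complex:
  "complex_of_real (blaschke_denom a c r) = (1 - c * cnj a) * (1 - cnj c * a) - (of_real r)^2 * a * cnj a"
  unfolding blaschke_denom_def of_real_diff of_real_mult of_real_power of_real_norm_power2 by simp

lemma cnj_blaschke_centre:
  "cnj (blaschke_centre a c r) =
     ((1 - c * cnj a) * (cnj c - cnj a) + of_real r ^ 2 * cnj a) / of_real (blaschke_denom a c r)"
  unfolding blaschke_centre_def by simp

lemma blaschke_radius_complex:
  "complex_of_real (blaschke_radius a c r) = of_real r * (1 - a * cnj a) / of_real (blaschke_denom a c r)"
  unfolding blaschke_radius_def by (simp add: of_real_norm_power2)

lemma blaschke_centre_0 [simp]: "blaschke_centre 0 c r = c"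
  unfolding blaschke_centre_def blaschke_denom_def by simp

lemma blaschke_denom_pos:
  assumes a: "cmod a < 1" and cr: "cmod c + r < 1" and r: "0 \<le> r"
  shows "0 < blaschke_denom a c r"
proof -
  have "cmod (c * cnj a) = cmod c * cmod a" by (simp add: norm_mult)
  also have "\<dots> \<le> cmod c" using a by (simp add: mult_left_le)
  finally have "1 - cmod c \<le> cmod (1 - c * cnj a)"
    by (metis norm_one norm_triangle_ineq2 diff_le_eq add.commute le_diff_eq order_trans norm_minus_commute)
  then have "r * cmod a < cmod (1 - c * cnj a)"
    using cr r a by (smt (verit) mult_left_le norm_ge_zero)
  then have "(r * cmod a)^2 < (cmod (1 - c * cnj a))^2"
    using r by (simp add: power_strict_mono)
  then show ?thesis unfolding blaschke_denom_def by (simp add: power_mult_distrib)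
qed

lemma blaschke_radius_pos:
  assumes "cmod a < 1" "cmod c + r < 1" "0 < r"
  shows "0 < blaschke_radius a c r"
  using blaschke_denom_pos[of a c r] assms unfolding blaschke_radius_def by (simp add: abs_square_less_1)

lemma circle_in_disc:
  assumes "cmod c + r < 1" "cmod (z - c) = r"
  shows "cmod z < 1"
proof -
  have "cmod z \<le> cmod c + cmod (z - c)" by (metis add.commute diff_add_cancel norm_triangle_ineq)
  then show ?thesis using assms by simp
qed

text \<open>In the following polynomial identities \<open>ca\<close>, \<open>cc\<close>, \<open>cz\<close>, \<open>cp\<close> stand for the conjugates of
  \<open>a\<close>, \<open>c\<close>, \<open>z\<close>, \<open>p\<close>, so that \<open>algebra\<close> can treat them as independent variables.\<close>

lemma blaschke_circle_identity:
  fixes a ca c cc z cz r X D D' :: complex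
  assumes X: "X = (1 - c*ca)*(1 - cc*a) - r^2*a*ca" "X \<noteq> 0"
   and D: "D = 1 - ca*z" "D \<noteq> 0" and D': "D' = 1 - a*cz" "D' \<noteq> 0"
  shows "((z-a)/D - ((1 - cc*a)*(c-a) + r^2*a)/X)*((cz - ca)/D' - ((1 - c*ca)*(cc - ca) + r^2*ca)/X)
           - (r*(1-a*ca)/X)^2
       = (1-a*ca)^2/(X*D*D') * ((z-c)*(cz-cc) - r^2)"
proof -
  have "((z-a)/D - ((1 - cc*a)*(c-a) + r^2*a)/X)*((cz - ca)/D' - ((1 - c*ca)*(cc - ca) + r^2*ca)/X)
          - (r*(1-a*ca)/X)^2
      = (((z-a)*X - ((1 - cc*a)*(c-a) + r^2*a)*D)*((cz - ca)*X - ((1 - c*ca)*(cc - ca) + r^2*ca)*D')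
          - (r*(1-a*ca))^2*D*D')/(X*X*D*D')"
    using X(2) D(2) D'(2) by (simp add: field_simps power2_eq_square)
  also have "\<dots> = ((1-a*ca)^2 * X * ((z-c)*(cz-cc) - r^2))/(X*X*D*D')"
    by (rule arg_cong[where f="\<lambda>t. t/(X*X*D*D')"]) (unfold X(1) D(1) D'(1), algebra)
  also have "\<dots> = (1-a*ca)^2/(X*D*D') * ((z-c)*(cz-cc) - r^2)"
    using X(2) D(2) D'(2) by (simp add: field_simps power2_eq_square)
  finally show ?thesis .
qed

lemma blaschke_circle_eq:
  assumes A: "blaschke_denom a c r \<noteq> 0" and d: "1 - cnj a * z \<noteq> 0"
  shows "(cmod (blaschke a z - blaschke_centre a c r))^2 - (blaschke_radius a c r)^2
       = (1 - (cmod a)^2)^2 / (blaschke_denom a c r * (cmod (1 - cnj a * z))^2) * ((cmod (z - c))^2 - r^2)"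
proof -
  have A': "complex_of_real (blaschke_denom a c r) \<noteq> 0" using A by simp
  have "complex_of_real ((cmod (blaschke a z - blaschke_centre a c r))^2 - (blaschke_radius a c r)^2)
     = (blaschke a z - blaschke_centre a c r) * (cnj (blaschke a z) - cnj (blaschke_centre a c r))
         - (complex_of_real (blaschke_radius a c r))^2"
    unfolding of_real_diff of_real_power of_real_norm_power2 by simp
  also have "\<dots> = ((z-a)/(1 - cnj a * z) - ((1 - cnj c*a)*(c-a) + (of_real r)^2*a)/of_real (blaschke_denom a c r))
       * ((cnj z - cnj a)/(1 - a * cnj z)
           - ((1 - c*cnj a)*(cnj c - cnj a) + (of_real r)^2*cnj a)/of_real (blaschke_denom a c r))
       - (of_real r*(1-a*cnj a)/of_real (blaschke_denom a c r))^2"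
    unfolding cnj_blaschke cnj_blaschke_centre blaschke_radius_complex
    by (simp add: blaschke_eq blaschke_centre_def)
  also have "\<dots> = (1-a*cnj a)^2/(of_real (blaschke_denom a c r)*(1 - cnj a * z)*(1 - a * cnj z))
                   * ((z-c)*(cnj z-cnj c) - (of_real r)^2)"
    by (rule blaschke_circle_identity[OF blaschke_denom_complex A' refl d refl
                                        one_minus_cnj_mult_commute[OF d]])
  also have "\<dots> = complex_of_real ((1 - (cmod a)^2)^2 / (blaschke_denom a c r * (cmod (1 - cnj a * z))^2)
                   * ((cmod (z - c))^2 - r^2))"
    unfolding of_real_mult of_real_divide of_real_diff of_real_power of_real_norm_power2
      complex_norm_square by simp
  finally show ?thesis using of_real_eq_iff by blast
qed

lemma blaschke_circle_iff:
  assumes a: "cmod a < 1" and cr: "cmod c + r < 1" and r: "0 \<le> r" and z: "cmod z < 1"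
  shows "cmod (blaschke a z - blaschke_centre a c r) = blaschke_radius a c r \<longleftrightarrow> cmod (z - c) = r"
proof -
  have A: "0 < blaschke_denom a c r" by (rule blaschke_denom_pos[OF a cr r])
  have d: "1 - cnj a * z \<noteq> 0" by (rule one_minus_cnj_mult_nonzero[OF a z])
  have a2: "0 < 1 - (cmod a)^2" using a by (simp add: abs_square_less_1)
  have K: "(1 - (cmod a)^2)^2 / (blaschke_denom a c r * (cmod (1 - cnj a * z))^2) > 0"
    using A d a2 by (intro divide_pos_pos mult_pos_pos zero_less_power) auto
  have R: "0 \<le> blaschke_radius a c r"
    unfolding blaschke_radius_def using A r a2 by (intro divide_nonneg_pos mult_nonneg_nonneg) auto
  have e: "(cmod (blaschke a z - blaschke_centre a c r))^2 - (blaschke_radius a c r)^2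
       = (1 - (cmod a)^2)^2 / (blaschke_denom a c r * (cmod (1 - cnj a * z))^2) * ((cmod (z - c))^2 - r^2)"
    by (rule blaschke_circle_eq) (use A d in auto)
  have "cmod (blaschke a z - blaschke_centre a c r) = blaschke_radius a c r
        \<longleftrightarrow> (cmod (blaschke a z - blaschke_centre a c r))^2 - (blaschke_radius a c r)^2 = 0"
    using R by (smt (verit) norm_ge_zero power2_eq_iff_nonneg)
  also have "\<dots> \<longleftrightarrow> (cmod (z - c))^2 - r^2 = 0"
    unfolding e using K by (metis less_irrefl mult_eq_0_iff)
  also have "\<dots> \<longleftrightarrow> cmod (z - c) = r" using r by (smt (verit) norm_ge_zero power2_eq_iff_nonneg)
  finally show ?thesis .
qed

text \<open>Conformality: the direction from a point of the circle to its centre is rotated by a unimodular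
  factor that depends only on the point, not on the circle.\<close>

lemma blaschke_normal_identity:
  fixes a ca c cc p cp r X D :: complex
  assumes "(p - c) * (cp - cc) = r^2"
    and "X = (1 - c*ca)*(1 - cc*a) - r^2*a*ca" "X \<noteq> 0" and "D = 1 - ca * p" "D \<noteq> 0"
  shows "((1 - cc*a)*(c-a) + r^2*a)/X - (p - a)/D = (1 - a*ca)*(c-p)*(1 - a*cp)/(X*D)"
proof -
  have "((1 - cc*a)*(c-a) + r^2*a) * D - (p - a) * X = (1 - a*ca)*(c-p)*(1 - a*cp)"
    using assms(1) unfolding assms(2,4) by algebra
  then show ?thesis by (simp add: diff_frac_eq assms(3,5))
qed

lemma blaschke_normal:
  assumes a: "cmod a < 1" and A: "blaschke_denom a c r \<noteq> 0" and d: "1 - cnj a * p \<noteq> 0"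
    and r: "r \<noteq> 0" and p: "cmod (p - c) = r"
  shows "(blaschke_centre a c r - blaschke a p) / of_real (blaschke_radius a c r)
       = ((c - p) / of_real r) * ((1 - a * cnj p) / (1 - cnj a * p))"
proof -
  have A': "complex_of_real (blaschke_denom a c r) \<noteq> 0" using A by simp
  have ma: "1 - a * cnj a \<noteq> 0"
  proof
    assume "1 - a * cnj a = 0"
    then have "(cmod a)^2 = 1" using complex_norm_square[of a] by (metis of_real_1 of_real_eq_iff right_minus_eq)
    with a show False by (simp add: abs_square_eq_1)
  qed
  have p': "(p - c) * (cnj p - cnj c) = (of_real r)^2"
    using arg_cong[OF p, of "\<lambda>t. (complex_of_real t)^2"] unfolding of_real_norm_power2 by simp
  have "blaschke_centre a c r - blaschke a p
      = (1 - a * cnj a) * (c - p) * (1 - a * cnj p) / (of_real (blaschke_denom a c r) * (1 - cnj a * p))"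
    unfolding blaschke_centre_def blaschke_eq
    by (rule blaschke_normal_identity[OF p' blaschke_denom_complex A' refl d])
  moreover have "\<And>u Q R A D \<rho> :: complex. u \<noteq> 0 \<Longrightarrow> A \<noteq> 0 \<Longrightarrow> D \<noteq> 0 \<Longrightarrow> \<rho> \<noteq> 0 \<Longrightarrow>
       (u * Q * R / (A * D)) / (\<rho> * u / A) = (Q / \<rho>) * (R / D)"
    by (simp add: field_simps)
  ultimately show ?thesis
    unfolding blaschke_radius_complex using ma A' d r by simp
qed

text \<open>For a circle centred at \<open>0\<close> of radius \<open>t\<close> this is \<open>t / (1 + t\<^sup>2) = tanh \<rho> / 2\<close>, where \<open>\<rho>\<close>
  is its hyperbolic radius; it is invariant under disc automorphisms.\<close>

definition circle_invariant :: "complex \<Rightarrow> real \<Rightarrow> real" where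
  "circle_invariant c r = r / (1 + r^2 - (cmod c)^2)"

lemma circle_invariant_identity:
  fixes a ca c cc r X :: complex
  assumes "X = (1 - c*ca)*(1 - cc*a) - r^2*a*ca" "X \<noteq> 0"
  shows "1 + (r*(1-a*ca)/X)^2 - (((1 - cc*a)*(c-a) + r^2*a)/X) * (((1 - c*ca)*(cc - ca) + r^2*ca)/X)
     = (1 - a*ca)*(1 - c*cc + r^2)/X"
proof -
  have "1 + (r*(1-a*ca)/X)^2 - (((1 - cc*a)*(c-a) + r^2*a)/X) * (((1 - c*ca)*(cc - ca) + r^2*ca)/X)
      = (X * X + (r*(1-a*ca))^2 - ((1 - cc*a)*(c-a) + r^2*a) * ((1 - c*ca)*(cc - ca) + r^2*ca)) / (X * X)"
    using assms(2) by (simp add: field_simps power2_eq_square)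
  also have "X * X + (r*(1-a*ca))^2 - ((1 - cc*a)*(c-a) + r^2*a) * ((1 - c*ca)*(cc - ca) + r^2*ca)
      = (1 - a*ca)*(1 - c*cc + r^2) * X"
    unfolding assms(1) by algebra
  finally show ?thesis using assms(2) by simp
qed
lemma circle_invariant_blaschke:
  assumes A: "blaschke_denom a c r \<noteq> 0" and a: "cmod a < 1" and k: "1 + r^2 - (cmod c)^2 \<noteq> 0"
  shows "circle_invariant (blaschke_centre a c r) (blaschke_radius a c r) = circle_invariant c r"
proof -
  have A': "complex_of_real (blaschke_denom a c r) \<noteq> 0" using A by simp
  have "complex_of_real (1 + (blaschke_radius a c r)^2 - (cmod (blaschke_centre a c r))^2)
      = 1 + (complex_of_real (blaschke_radius a c r))^2 - blaschke_centre a c r * cnj (blaschke_centre a c r)"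
    unfolding of_real_add of_real_diff of_real_power of_real_norm_power2 by simp
  also have "\<dots> = (1 - a * cnj a) * (1 - c * cnj c + (of_real r)^2) / of_real (blaschke_denom a c r)"
    unfolding blaschke_radius_complex cnj_blaschke_centre
    by (simp only: blaschke_centre_def) (rule circle_invariant_identity[OF blaschke_denom_complex A'])
  also have "\<dots> = complex_of_real ((1 - (cmod a)^2) * (1 + r^2 - (cmod c)^2) / blaschke_denom a c r)"
    unfolding of_real_mult of_real_divide of_real_diff of_real_add of_real_power of_real_norm_power2
    by simp
  finally have "1 + (blaschke_radius a c r)^2 - (cmod (blaschke_centre a c r))^2
      = (1 - (cmod a)^2) * (1 + r^2 - (cmod c)^2) / blaschke_denom a c r"
    using of_real_eq_iff by blast
  moreover have "0 < 1 - (cmod a)^2" using a by (simp add: abs_square_less_1)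
  then have "1 - (cmod a)^2 \<noteq> 0" by simp
  moreover have "\<And>r u k A::real. u \<noteq> 0 \<Longrightarrow> k \<noteq> 0 \<Longrightarrow> A \<noteq> 0 \<Longrightarrow> (r*u/A)/(u*k/A) = r/k"
    by (simp add: field_simps)
  ultimately show ?thesis
    unfolding circle_invariant_def blaschke_radius_def using A k by simp
qed

lemma circle_eq_if_subset:
  assumes r: "0 < r" and sub: "\<And>z. cmod (z - c) = r \<Longrightarrow> cmod (z - e) = \<rho>"
  shows "c = e \<and> r = \<rho>"
proof -
  define d where "d = c - e"
  have on: "(cmod (d + of_real r * u))^2 = \<rho>^2" if "cmod u = 1" for u
  proof -
    have "cmod ((c + of_real r * u) - c) = r" using that r by (simp add: norm_mult)
    then have "cmod ((c + of_real r * u) - e) = \<rho>" by (rule sub)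
    then show ?thesis unfolding d_def by (simp add: algebra_simps)
  qed
  have h1: "(Re d + r)^2 + (Im d)^2 = \<rho>^2" using on[of 1] by (simp add: cmod_power2)
  have h2: "(Re d - r)^2 + (Im d)^2 = \<rho>^2" using on[of "-1"] by (simp add: cmod_power2)
  have h3: "(Re d)^2 + (Im d + r)^2 = \<rho>^2" using on[of "\<i>"] by (simp add: cmod_power2)
  have h4: "(Re d)^2 + (Im d - r)^2 = \<rho>^2" using on[of "-\<i>"] by (simp add: cmod_power2)
  have "(Re d + r)^2 - (Re d - r)^2 = 4*r*Re d" "(Im d + r)^2 - (Im d - r)^2 = 4*r*Im d"
    by (simp_all add: power2_eq_square algebra_simps)
  then have "4*r*Re d = 0" "4*r*Im d = 0" using h1 h2 h3 h4 by linarith+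
  then have "Re d = 0" "Im d = 0" using r by simp_all
  then have "c = e" unfolding d_def by (simp add: complex_eq_iff)
  moreover have "cmod ((c + of_real r) - e) = \<rho>" by (rule sub) (use r in simp)
  ultimately show ?thesis using r by simp
qed

section \<open>Hyperbolic centre and radius\<close>

text \<open>The hyperbolic centre of a circle in the disc lies on the ray through its Euclidean centre
  \<open>c\<close>, at \<open>\<mu> c\<close> where \<open>\<mu>\<close> is the smaller root of \<open>|c|\<^sup>2 \<mu>\<^sup>2 - (1 + |c|\<^sup>2 - r\<^sup>2) \<mu> + 1 = 0\<close>;
  this equation says that \<open>blaschke (\<mu> c)\<close> moves the circle to one centred at \<open>0\<close>.\<close>

definition hyp_centre_factor :: "complex \<Rightarrow> real \<Rightarrow> real" where
  "hyp_centre_factor c r =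
     2 / ((1 + (cmod c)^2 - r^2) + sqrt ((1 + (cmod c)^2 - r^2)^2 - 4 * (cmod c)^2))"

definition hyp_centre :: "complex \<Rightarrow> real \<Rightarrow> complex" where
  "hyp_centre c r = of_real (hyp_centre_factor c r) * c"

definition centred_radius :: "complex \<Rightarrow> real \<Rightarrow> real" where
  "centred_radius c r = blaschke_radius (hyp_centre c r) c r"

lemma hyp_centre_factor_root:
  assumes cr: "cmod c + r < 1" and r: "0 < r"
  defines "\<mu> \<equiv> hyp_centre_factor c r"
  shows "0 < \<mu>" "\<mu> * cmod c < 1" "(cmod c)^2 * \<mu>^2 - (1 + (cmod c)^2 - r^2) * \<mu> + 1 = 0"
proof -
  define k where "k = cmod c"
  define B where "B = 1 + k^2 - r^2"
  define S where "S = sqrt (B^2 - 4*k^2)"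
  have k0: "0 \<le> k" unfolding k_def by simp
  have "r^2 < (1 - k)^2" using cr r unfolding k_def by (simp add: power_strict_mono)
  then have B2k: "0 < B - 2*k" unfolding B_def by (simp add: power2_eq_square algebra_simps)
  moreover have "B^2 - 4*k^2 = (B - 2*k) * (B + 2*k)" by (simp add: power2_eq_square algebra_simps)
  ultimately have "0 \<le> B^2 - 4*k^2" using k0 by simp
  then have S0: "0 \<le> S" and SS: "S^2 = B^2 - 4*k^2" unfolding S_def by simp_all
  have BS: "0 < B + S" using B2k k0 S0 by simp
  have mu: "\<mu> = 2 / (B + S)" unfolding \<mu>_def hyp_centre_factor_def B_def S_def k_def ..
  show "0 < \<mu>" unfolding mu using BS by simp
  have "2 * k < B + S" using B2k S0 by simp
  then show "\<mu> * cmod c < 1" unfolding mu k_def[symmetric] using BS by (simp add: divide_less_eq)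
  have "\<And>X::real. X \<noteq> 0 \<Longrightarrow> k^2 * (2/X)^2 - B * (2/X) + 1 = (4*k^2 - 2*B*X + X^2) / X^2"
    by (simp add: field_simps power2_eq_square)
  then have "k^2 * (2 / (B + S))^2 - B * (2 / (B + S)) + 1 = (4*k^2 - 2*B*(B+S) + (B+S)^2) / (B+S)^2"
    using BS by simp
  also have "4*k^2 - 2*B*(B+S) + (B+S)^2 = 4*k^2 - B^2 + S^2"
    by (simp add: power2_eq_square algebra_simps)
  finally show "(cmod c)^2 * \<mu>^2 - (1 + (cmod c)^2 - r^2) * \<mu> + 1 = 0"
    unfolding mu SS k_def[symmetric] B_def[symmetric] by simp
qed

lemma hyp_centre_in_disc: "cmod c + r < 1 \<Longrightarrow> 0 < r \<Longrightarrow> cmod (hyp_centre c r) < 1"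
  using hyp_centre_factor_root(1,2)[of c r] unfolding hyp_centre_def by (simp add: norm_mult)

lemma blaschke_centre_hyp_centre:
  assumes "cmod c + r < 1" "0 < r"
  shows "blaschke_centre (hyp_centre c r) c r = 0"
proof -
  define \<mu> where "\<mu> = hyp_centre_factor c r"
  have cc: "cnj c * c = of_real ((cmod c)^2)" using complex_norm_square[of c] by (simp add: mult.commute)
  have "(1 - cnj c * hyp_centre c r) * (c - hyp_centre c r) + of_real r ^ 2 * hyp_centre c r
      = c * ((1 - of_real \<mu> * (cnj c * c)) * (1 - of_real \<mu>) + of_real r ^ 2 * of_real \<mu>)"
    unfolding hyp_centre_def \<mu>_def by (simp add: algebra_simps)
  also have "\<dots> = c * of_real ((cmod c)^2 * \<mu>^2 - (1 + (cmod c)^2 - r^2) * \<mu> + 1)"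
    unfolding cc by (simp add: algebra_simps power2_eq_square)
  also have "\<dots> = 0" using hyp_centre_factor_root(3)[OF assms] unfolding \<mu>_def by simp
  finally show ?thesis unfolding blaschke_centre_def by simp
qed

lemma blaschke_hyp_centre_circle:
  assumes cr: "cmod c + r < 1" and r: "0 < r" and z: "cmod z < 1"
  shows "cmod (blaschke (hyp_centre c r) z) = centred_radius c r \<longleftrightarrow> cmod (z - c) = r"
  using blaschke_circle_iff[OF hyp_centre_in_disc[OF cr r] cr _ z] r
  unfolding blaschke_centre_hyp_centre[OF cr r] centred_radius_def by simp

lemma circle_invariant_centred:
  assumes "0 \<le> t" "t < 1"
  shows "circle_invariant 0 t = t / (1 + t^2)"
  unfolding circle_invariant_def by simp

lemma circle_invariant_blaschke_disc:
  assumes a: "cmod a < 1" and cr: "cmod c + r < 1" and r: "0 < r"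
  shows "circle_invariant (blaschke_centre a c r) (blaschke_radius a c r) = circle_invariant c r"
proof (rule circle_invariant_blaschke[OF _ a])
  show "blaschke_denom a c r \<noteq> 0" using blaschke_denom_pos[OF a cr] r by simp
  have "(cmod c)^2 < 1" using cr r by (simp add: abs_square_less_1)
  then show "1 + r^2 - (cmod c)^2 \<noteq> 0" by (smt (verit) zero_le_power2)
qed

lemma centred_radius_bounds:
  assumes cr: "cmod c + r < 1" and r: "0 < r"
  shows "0 < centred_radius c r" "centred_radius c r < 1"
proof -
  have h: "cmod (hyp_centre c r) < 1" by (rule hyp_centre_in_disc[OF cr r])
  show "0 < centred_radius c r" unfolding centred_radius_def by (rule blaschke_radius_pos[OF h cr r])
  define z where "z = c + of_real r"
  have zc: "cmod (z - c) = r" unfolding z_def using r by simp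
  have zd: "cmod z < 1" by (rule circle_in_disc[OF cr zc])
  have "cmod (blaschke (hyp_centre c r) z) = centred_radius c r"
    using blaschke_hyp_centre_circle[OF cr r zd] zc by simp
  then show "centred_radius c r < 1" using Moebius_function_norm_lt_1[OF h zd, of 0] by simp
qed

lemma circle_invariant_eq_centred_radius:
  assumes "cmod c + r < 1" "0 < r"
  shows "circle_invariant c r = centred_radius c r / (1 + (centred_radius c r)^2)"
  using circle_invariant_blaschke_disc[OF hyp_centre_in_disc[OF assms] assms]
  unfolding blaschke_centre_hyp_centre[OF assms] centred_radius_def[symmetric] circle_invariant_def
  by simp

lemma artanh_less:
  fixes x y :: real
  assumes "-1 < x" "x < y" "y < 1"
  shows "artanh x < artanh y"
proof -
  have "(1 + x) / (1 - x) < (1 + y) / (1 - y)" using assms by (simp add: field_simps)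
  moreover have "0 < (1 + x) / (1 - x)" using assms by simp
  ultimately show ?thesis unfolding artanh_def by simp
qed

lemma artanh_inj:
  fixes x y :: real
  assumes "-1 < x" "x < 1" "-1 < y" "y < 1" "artanh x = artanh y"
  shows "x = y"
  using artanh_less assms by (metis linorder_neqE_linordered_idom less_irrefl)

lemma div_one_plus_square_inj:
  fixes x y :: real
  assumes "0 \<le> x" "x < 1" "0 \<le> y" "y < 1" "x / (1 + x^2) = y / (1 + y^2)"
  shows "x = y"
proof -
  have "1 + x^2 > 0" "1 + y^2 > 0" by (simp_all add: add_pos_nonneg)
  then have "x * (1 + y^2) = y * (1 + x^2)" using assms(5) by (simp add: field_simps)
  then have "(x - y) * (1 - x*y) = 0" by (simp add: power2_eq_square algebra_simps)
  moreover have "x * y < 1" using assms by (metis mult_strict_mono' mult_1_left less_eq_real_def)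
  ultimately show ?thesis by simp
qed

lemma hyp_dist_blaschke: "hyp_dist h z = 2 * artanh (cmod (blaschke h z))"
  unfolding hyp_dist_def blaschke_eq by (simp add: norm_divide norm_minus_commute)

lemma hyp_circle_about_hyp_centre:
  assumes cr: "cmod c + r < 1" and r: "0 < r"
  shows "{z. cmod (z - c) = r} = {z. cmod z < 1 \<and> hyp_dist (hyp_centre c r) z = 2 * artanh (centred_radius c r)}"
proof -
  have h: "cmod (hyp_centre c r) < 1" by (rule hyp_centre_in_disc[OF cr r])
  have t: "0 < centred_radius c r" "centred_radius c r < 1" using centred_radius_bounds[OF cr r] by auto
  have "cmod (z - c) = r \<longleftrightarrow> hyp_dist (hyp_centre c r) z = 2 * artanh (centred_radius c r)"
    if zd: "cmod z < 1" for z
  proof -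
    have "-1 < cmod (blaschke (hyp_centre c r) z)" "cmod (blaschke (hyp_centre c r) z) < 1"
      using Moebius_function_norm_lt_1[OF h zd, of 0] norm_ge_zero[of "blaschke (hyp_centre c r) z"]
      by linarith+
    then have "cmod (blaschke (hyp_centre c r) z) = centred_radius c r
        \<longleftrightarrow> artanh (cmod (blaschke (hyp_centre c r) z)) = artanh (centred_radius c r)"
      using artanh_inj t by (smt (verit))
    then show ?thesis unfolding hyp_dist_blaschke blaschke_hyp_centre_circle[OF cr r zd] by simp
  qed
  then show ?thesis using circle_in_disc[OF cr] by blast
qed

text \<open>Uniqueness: moving the given centre \<open>h\<close> to \<open>0\<close> turns the circle into one centred at \<open>0\<close>,
  whose radius is then determined by the invariant.\<close>

lemma hyp_circle_radius_unique:
  assumes cr: "cmod c + r < 1" and r: "0 < r" and h: "cmod h < 1"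
    and hs: "{z. cmod (z - c) = r} = {z. cmod z < 1 \<and> hyp_dist h z = \<rho>}"
  shows "\<rho> = 2 * artanh (centred_radius c r)"
proof -
  have on: "cmod z < 1 \<and> 2 * artanh (cmod (blaschke h z)) = \<rho>" if "cmod (z - c) = r" for z
    using hs that unfolding hyp_dist_blaschke by blast
  define z0 where "z0 = c + of_real r"
  have z0c: "cmod (z0 - c) = r" unfolding z0_def using r by simp
  define t where "t = cmod (blaschke h z0)"
  have z0d: "cmod z0 < 1" and rho: "\<rho> = 2 * artanh t" using on[OF z0c] unfolding t_def by auto
  have t1: "t < 1" unfolding t_def by (rule Moebius_function_norm_lt_1[OF h z0d])
  have t0: "0 \<le> t" unfolding t_def by simp
  have image: "cmod (blaschke h z) = t" if zc: "cmod (z - c) = r" for z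
  proof -
    have "cmod z < 1" "2 * artanh (cmod (blaschke h z)) = \<rho>" using on[OF zc] by auto
    moreover have "cmod (blaschke h z) < 1" using Moebius_function_norm_lt_1[OF h] calculation by blast
    moreover have "-1 < cmod (blaschke h z)" by (smt (verit) norm_ge_zero)
    ultimately show ?thesis using artanh_inj[of "cmod (blaschke h z)" t] rho t1 t0 by simp
  qed
  have t_pos: "0 < t"
  proof (rule ccontr)
    assume "\<not> 0 < t"
    define z1 where "z1 = c - of_real r"
    have z1c: "cmod (z1 - c) = r" unfolding z1_def using r by simp
    have "blaschke h z0 = blaschke h z1"
      using image[OF z0c] image[OF z1c] \<open>\<not> 0 < t\<close> t0 by simp
    then have "z0 = z1" using blaschke_inj h z0d circle_in_disc[OF cr z1c] by blast
    then show False unfolding z0_def z1_def using r by (simp add: complex_eq_iff)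
  qed
  have hm: "cmod (-h) < 1" and ct: "cmod 0 + t < 1" using h t1 by simp_all
  have "cmod (z - blaschke_centre (-h) 0 t) = blaschke_radius (-h) 0 t" if zc: "cmod (z - c) = r" for z
  proof -
    have zd: "cmod z < 1" by (rule circle_in_disc[OF cr zc])
    have "cmod (blaschke (-h) (blaschke h z) - blaschke_centre (-h) 0 t) = blaschke_radius (-h) 0 t"
      using blaschke_circle_iff[OF hm ct _ Moebius_function_norm_lt_1[OF h zd]] t0 image[OF zc] by simp
    then show ?thesis using blaschke_inverse[OF h zd] by simp
  qed
  then have "c = blaschke_centre (-h) 0 t \<and> r = blaschke_radius (-h) 0 t"
    by (rule circle_eq_if_subset[OF r])
  then have "circle_invariant c r = t / (1 + t^2)"
    using circle_invariant_blaschke_disc[OF hm ct t_pos] circle_invariant_centred t0 t1 by simp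
  then have "centred_radius c r = t"
    using circle_invariant_eq_centred_radius[OF cr r] centred_radius_bounds[OF cr r] t0 t1
      div_one_plus_square_inj by (metis less_eq_real_def)
  then show ?thesis using rho by simp
qed

lemma hyp_radius_eq:
  assumes "cmod c + r < 1" "0 < r"
  shows "hyp_radius c r = 2 * artanh (centred_radius c r)"
  unfolding hyp_radius_def
proof (rule the_equality)
  show "\<exists>h. cmod h < 1 \<and> {z. cmod (z - c) = r} = {z. cmod z < 1 \<and> hyp_dist h z = 2 * artanh (centred_radius c r)}"
    using hyp_centre_in_disc[OF assms] hyp_circle_about_hyp_centre[OF assms] by blast
qed (use hyp_circle_radius_unique[OF assms] in blast)

section \<open>The half kite angle\<close>

lemma cos_less_1: "0 < u \<Longrightarrow> u < pi \<Longrightarrow> cos u < 1"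
  by (smt (verit) cos_monotone_0_pi cos_zero)

lemma cos_greater_minus_1: "0 < u \<Longrightarrow> u < pi \<Longrightarrow> -1 < cos u"
  by (smt (verit) cos_monotone_0_pi cos_pi)

lemma cis_inj_0_2pi:
  assumes "cis x = cis y" "0 < x" "x < 2*pi" "0 < y" "y < 2*pi"
  shows "x = y"
proof -
  have "cis (x - pi) = cis (y - pi)" using assms(1) by (simp add: cis_divide[symmetric])
  then have "Arg (cis (x - pi)) = Arg (cis (y - pi))" by simp
  then show ?thesis using assms by (simp add: Arg_cis)
qed

lemma Arg_Complex_upper:
  assumes D: "0 < D"
  shows "Arg (Complex N D) = pi/2 - arctan (N/D)"
proof (rule cis_Arg_unique)
  define q where "q = sqrt (1 + (N/D)^2)"
  have pos: "0 < q" unfolding q_def by (simp add: add_pos_nonneg)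
  have m: "cmod (Complex N D) = D * q"
  proof -
    have "N^2 + D^2 = D^2 * (1 + (N/D)^2)" using D by (simp add: field_simps power2_eq_square)
    then have "sqrt (N^2 + D^2) = sqrt (D^2) * q" unfolding q_def by (simp add: real_sqrt_mult)
    then show ?thesis using D by (simp add: cmod_def)
  qed
  have z: "Complex N D \<noteq> 0" using D by (simp add: complex_eq_iff)
  have c1: "cos (pi/2 - arctan (N/D)) = sin (arctan (N/D))" by (simp add: sin_cos_eq)
  have sa: "sin (arctan (N/D)) = (N/D) / q" unfolding q_def by (rule sin_arctan)
  have ca: "cos (arctan (N/D)) = 1 / q" unfolding q_def by (rule cos_arctan)
  have s1: "sin (pi/2 - arctan (N/D)) = cos (arctan (N/D))" by (simp add: cos_sin_eq)
  show "sgn (Complex N D) = cis (pi/2 - arctan (N/D))"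
  proof (rule complex_eqI)
    show "Re (sgn (Complex N D)) = Re (cis (pi / 2 - arctan (N / D)))"
      unfolding Re_sgn m cis.sel c1 sa using D pos by (simp add: field_simps)
    show "Im (sgn (Complex N D)) = Im (cis (pi / 2 - arctan (N / D)))"
      unfolding Im_sgn m cis.sel s1 ca using D pos by (simp add: field_simps)
  qed
  show "- pi < pi / 2 - arctan (N / D)" using arctan_ubound[of "N/D"] pi_gt_zero by linarith
  show "pi / 2 - arctan (N / D) \<le> pi" using arctan_lbound[of "N/D"] pi_gt_zero by linarith
qed

text \<open>The angle at the centre \<open>0\<close> of a circle of radius \<open>a\<close>, between an intersection point and
  the centre of a second circle meeting it at exterior angle \<open>u\<close>, where \<open>b\<close> is the radius of the
  second circle after its own hyperbolic centre is moved to \<open>0\<close> (see \<open>kite_half_angle_centred\<close>).\<close>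

definition half_kite_angle :: "real \<Rightarrow> real \<Rightarrow> real \<Rightarrow> real" where
  "half_kite_angle a b u = Arg (Complex (a*(1+b^2) - b*cos u*(1+a^2)) (b * sin u*(1-a^2)))"

definition half_kite_cot :: "real \<Rightarrow> real \<Rightarrow> real \<Rightarrow> real" where
  "half_kite_cot a b u = (a*(1+b^2) - b*cos u*(1+a^2)) / (b * sin u*(1-a^2))"

lemma half_kite_angle_arctan:
  assumes "0 < a" "a < 1" "0 < b" "0 < u" "u < pi"
  shows "half_kite_angle a b u = pi/2 - arctan (half_kite_cot a b u)"
proof -
  have "sin u > 0" using assms by (simp add: sin_gt_zero)
  moreover have "1 - a^2 > 0" using assms by (simp add: abs_square_less_1)
  ultimately have "b * sin u*(1-a^2) > 0" using assms by simp
  then show ?thesis unfolding half_kite_angle_def half_kite_cot_def by (rule Arg_Complex_upper)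
qed

lemma half_kite_angle_bounds:
  assumes "0 < a" "a < 1" "0 < b" "0 < u" "u < pi"
  shows "0 < half_kite_angle a b u" "half_kite_angle a b u < pi"
  using half_kite_angle_arctan[OF assms] arctan_bounded[of "half_kite_cot a b u"] by auto

lemma half_kite_cot_shape_less:
  fixes \<beta> c x y :: real
  assumes \<beta>: "2 \<le> \<beta>" and c: "c < 1" and xy: "0 < x" "x < y" "y < 1"
  shows "(\<beta> * x - c * (1 + x^2)) / (1 - x^2) < (\<beta> * y - c * (1 + y^2)) / (1 - y^2)"
proof -
  have "2 * c * (x + y) < 2 * (1 + x*y)"
  proof (cases "c \<le> 0")
    case True then show ?thesis using xy by (smt (verit) mult_nonneg_nonneg mult_nonpos_nonneg)
  next
    case False
    then have "c * (x + y) < 1 * (x + y)" using c xy by (intro mult_strict_right_mono) auto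
    moreover have "0 < (1 - x) * (1 - y)" using xy by simp
    ultimately show ?thesis by (simp add: algebra_simps)
  qed
  moreover have "2 * (1 + x*y) \<le> \<beta> * (1 + x*y)" using mult_right_mono[OF \<beta>, of "1 + x*y"] xy by simp
  ultimately have "0 < (y - x) * (\<beta> * (1 + x*y) - 2 * c * (x + y))" using xy by simp
  also have "(y - x) * (\<beta> * (1 + x*y) - 2 * c * (x + y))
      = (\<beta> * y - c * (1 + y^2)) * (1 - x^2) - (\<beta> * x - c * (1 + x^2)) * (1 - y^2)"
    by (simp add: power2_eq_square algebra_simps)
  finally show ?thesis
    using xy by (simp add: divide_simps abs_square_less_1 mult.commute)
qed

lemma half_kite_cot_less:
  assumes a: "0 < a'" "a' < a" "a < 1" and b: "0 < b" "b < 1" and u: "0 < u" "u < pi"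
  shows "half_kite_cot a' b u < half_kite_cot a b u"
proof -
  define \<beta> where "\<beta> = (1 + b^2) / b"
  have s: "0 < sin u" using u by (simp add: sin_gt_zero)
  have "2 * b \<le> 1 + b^2" using zero_le_power2[of "1 - b"] by (simp add: power2_eq_square algebra_simps)
  then have \<beta>: "2 \<le> \<beta>" unfolding \<beta>_def using b by (simp add: field_simps)
  have cot: "half_kite_cot x b u = (\<beta> * x - cos u * (1 + x^2)) / (1 - x^2) / sin u" if "0 < x" "x < 1" for x
  proof -
    have "1 - x^2 > 0" using that by (simp add: abs_square_less_1)
    then show ?thesis unfolding half_kite_cot_def \<beta>_def using b s by (simp add: field_simps)
  qed
  have "(\<beta> * a' - cos u * (1 + a'^2)) / (1 - a'^2) / sin u < (\<beta> * a - cos u * (1 + a^2)) / (1 - a^2) / sin u"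
    using a by (intro divide_strict_right_mono half_kite_cot_shape_less[OF \<beta> cos_less_1[OF u]] s) auto
  then show ?thesis using cot[of a'] cot[of a] a by simp
qed

lemma half_kite_cot_le:
  assumes a: "0 < a" "a < 1" and b: "0 < b" "b \<le> b'" "b' < 1" and u: "0 < u" "u < pi"
  shows "half_kite_cot a b' u \<le> half_kite_cot a b u"
proof -
  define c where "c = cos u"
  define s where "s = sin u"
  have s: "s > 0" unfolding s_def using u by (simp add: sin_gt_zero)
  have d1: "1 - a^2 > 0" using a by (simp add: abs_square_less_1)
  have fr: "\<And>y. 0 < y \<Longrightarrow> half_kite_cot a y u = (a * (y + 1/y) - c * (1 + a^2)) / ((1 - a^2) * s)"
    unfolding half_kite_cot_def c_def s_def using s d1 by (simp add: field_simps power2_eq_square s_def)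
  have "b' + 1/b' \<le> b + 1/b"
  proof -
    have "(b + 1/b) - (b' + 1/b') = (b' - b) * (1 - b*b') / (b*b')" using b by (simp add: field_simps)
    moreover have "(b' - b) * (1 - b*b') / (b*b') \<ge> 0"
    proof -
      have "b * b' < 1" using b by (metis less_le_trans mult_strict_mono' mult_1_left less_eq_real_def)
      then show ?thesis using b by (intro divide_nonneg_pos mult_nonneg_nonneg) auto
    qed
    ultimately show ?thesis by simp
  qed
  then have "a * (b' + 1/b') - c * (1 + a^2) \<le> a * (b + 1/b) - c * (1 + a^2)" using a by simp
  then show ?thesis using fr[of b] fr[of b'] b d1 s by (simp add: divide_right_mono)
qed

lemma half_kite_angle_less:
  assumes a: "0 < a'" "a' < a" "a < 1" and b: "0 < b" "b \<le> b'" "b' < 1" and u: "0 < u" "u < pi"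
  shows "half_kite_angle a b u < half_kite_angle a' b' u"
proof -
  have "half_kite_cot a' b' u \<le> half_kite_cot a' b u" by (rule half_kite_cot_le) (use a b u in auto)
  also have "\<dots> < half_kite_cot a b u" by (rule half_kite_cot_less) (use a b u in auto)
  finally have "arctan (half_kite_cot a' b' u) < arctan (half_kite_cot a b u)" by (simp add: arctan_less_iff)
  then show ?thesis using half_kite_angle_arctan[of a b u] half_kite_angle_arctan[of a' b' u] a b u by simp
qed



definition defect_angle :: "real \<Rightarrow> real \<Rightarrow> real" where
  "defect_angle x u = Arg (Complex (1 - x * cos u) (x * sin u))"

lemma defect_angle_arctan:
  assumes "0 < x" "x < 1" "0 < u" "u < pi"
  shows "defect_angle x u = pi/2 - arctan ((1 - x * cos u) / (x * sin u))"
  unfolding defect_angle_def using assms by (intro Arg_Complex_upper) (simp add: sin_gt_zero)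


lemma defect_angle_bounds:
  assumes x: "0 < x" "x < 1" and u: "0 < u" "u < pi"
  shows "0 < defect_angle x u" "2 * defect_angle x u < pi - u"
proof -
  define c where "c = cos u"
  define s where "s = sin u"
  have s: "0 < s" unfolding s_def using u by (simp add: sin_gt_zero)
  have c1: "c < 1" "-1 < c" unfolding c_def using cos_less_1 cos_greater_minus_1 u by auto
  have xc: "x * c < 1"
  proof (cases "c \<le> 0")
    case True then show ?thesis using x by (smt (verit) mult_nonneg_nonpos)
  next
    case False then have "x * c < 1 * 1" using x c1 by (intro mult_strict_mono) auto
    then show ?thesis by simp
  qed
  have v: "0 < (1 - x * c) / (x * s)" using xc x s by simp
  show "0 < defect_angle x u" unfolding defect_angle_arctan[OF x u] c_def[symmetric] s_def[symmetric]
    using arctan_ubound[of "(1 - x * c) / (x * s)"] by simp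
  have t: "tan (u/2) = s / (1 + c)" unfolding s_def c_def using tan_half[of "u/2"] by (simp add: add.commute)
  have "s / (1 + c) < (1 - x * c) / (x * s)"
  proof -
    have ss: "s^2 = 1 - c^2" unfolding s_def c_def by (simp add: sin_squared_eq)
    have "x * (1 - c) < 1 - x * c" using x by (simp add: algebra_simps)
    then have "x * (1 - c) * (1 + c) < (1 - x * c) * (1 + c)" using c1 by (intro mult_strict_right_mono) auto
    moreover have e: "s * (x * s) = x * (1 - c) * (1 + c)"
    proof -
      have "s * (x * s) = x * s^2" by (simp add: power2_eq_square)
      also have "\<dots> = x * (1 - c) * (1 + c)" unfolding ss by (simp add: power2_eq_square algebra_simps)
      finally show ?thesis .
    qed
    ultimately have "s * (x * s) < (1 - x * c) * (1 + c)" by (simp only: e)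
    then show ?thesis using s x c1 by (simp add: divide_simps mult.commute)
  qed
  then have "arctan (tan (u/2)) < arctan ((1 - x * c) / (x * s))" unfolding t by (simp add: arctan_less_iff)
  moreover have "arctan (tan (u/2)) = u/2" using u by (intro arctan_tan) auto
  ultimately show "2 * defect_angle x u < pi - u" unfolding defect_angle_arctan[OF x u] c_def[symmetric] s_def[symmetric] by simp
qed

lemma defect_angle_less:
  assumes x: "0 < x'" "x' < x" "x < 1" and u: "0 < u" "u < pi"
  shows "defect_angle x' u < defect_angle x u"
proof -
  define c where "c = cos u"
  define s where "s = sin u"
  have s: "0 < s" unfolding s_def using u by (simp add: sin_gt_zero)
  have "1/(x * s) < 1/(x' * s)" using x s by (simp add: divide_simps)
  then have "1/(x * s) - c/s < 1/(x' * s) - c/s" by simp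
  moreover have "\<And>y. 0 < y \<Longrightarrow> (1 - y * c) / (y * s) = 1/(y * s) - c/s" using s by (simp add: field_simps)
  ultimately have "(1 - x * c) / (x * s) < (1 - x' * c) / (x' * s)" using x by simp
  then have "arctan ((1 - x * c) / (x * s)) < arctan ((1 - x' * c) / (x' * s))" by (simp add: arctan_less_iff)
  moreover have "0 < x" "x' < 1" using x by auto
  ultimately show ?thesis unfolding defect_angle_arctan[OF \<open>0 < x\<close> x(3) u] defect_angle_arctan[OF x(1) \<open>x' < 1\<close> u] c_def[symmetric] s_def[symmetric]
    by simp
qed

lemma half_kite_Complex_factor:
  "Complex (a*(1+b^2) - b*cos u*(1+a^2)) (b * sin u*(1-a^2))
     = (of_real a - of_real b * cis (-u)) * (1 - of_real (a*b) * cis u)"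
proof -
  have ww: "cis u * cis (-u) = 1" by (simp add: cis_mult)
  have "(of_real a - of_real b * cis (-u)) * (1 - of_real (a*b) * cis u)
      = of_real a + of_real a * (of_real b)^2 - (of_real a)^2 * of_real b * cis u - of_real b * cis (-u)"
    using ww by (simp add: power2_eq_square) algebra
  also have "\<dots> = Complex (a*(1+b^2) - b*cos u*(1+a^2)) (b * sin u*(1-a^2))"
    by (simp add: complex_eq_iff algebra_simps power2_eq_square)
  finally show ?thesis by simp
qed

text \<open>The two factorisations share the factor \<open>1 - a b e\<^sup>i\<^sup>u\<close>, and the product of the remaining
  factors is a positive multiple of \<open>-e\<^sup>-\<^sup>i\<^sup>u\<close>.\<close>

lemma half_kite_angle_pair_sum:
  assumes a: "0 < a" "a < 1" and b: "0 < b" "b < 1" and u: "0 < u" "u < pi"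
  shows "half_kite_angle a b u + half_kite_angle b a u = pi - u - 2 * defect_angle (a*b) u"
proof -
  define z1 where "z1 = Complex (a*(1+b^2) - b*cos u*(1+a^2)) (b * sin u*(1-a^2))"
  define z2 where "z2 = Complex (b*(1+a^2) - a*cos u*(1+b^2)) (a * sin u*(1-b^2))"
  define L where "L = a^2 + b^2 - 2*a*b*cos u"
  define V where "V = Complex (1 - (a*b) * cos u) ((a*b) * sin u)"
  have "L = (a - b)^2 + 2*a*b*(1 - cos u)" unfolding L_def by (simp add: power2_eq_square algebra_simps)
  then have L: "0 < L" using a b cos_less_1[OF u] by (smt (verit) mult_pos_pos zero_le_power2)
  have V: "1 - of_real (a*b) * cis u = cnj V" unfolding V_def by (simp add: complex_eq_iff)
  have "(of_real a - of_real b * cis (-u)) * (of_real b - of_real a * cis (-u))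
      = - cis (-u) * (of_real a ^ 2 + of_real b ^ 2 - of_real a * of_real b * (cis u + cis (-u)))"
    using cis_mult[of u "-u"] by (simp add: algebra_simps power2_eq_square)
  also have "cis u + cis (-u) = 2 * of_real (cos u)" by (simp add: complex_eq_iff)
  finally have "(of_real a - of_real b * cis (-u)) * (of_real b - of_real a * cis (-u)) = - cis (-u) * of_real L"
    unfolding L_def by simp
  then have prod: "z1 * z2 = of_real L * (- cis (-u)) * (cnj V)^2"
    unfolding z1_def z2_def half_kite_Complex_factor V[symmetric] mult.commute[of b a] by algebra
  have sp: "0 < sin u" using u by (simp add: sin_gt_zero)
  have ab: "0 < a*b" "a*b < 1" using a b by (simp_all add: mult_strict_mono' less_le_trans[of _ a 1])
  have "Im z1 > 0" "Im z2 > 0" unfolding z1_def z2_def using a b sp by (simp_all add: abs_square_less_1)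
  then have z: "z1 \<noteq> 0" "z2 \<noteq> 0" by auto
  have "Im V \<noteq> 0" unfolding V_def using ab sp by auto
  then have sV: "sgn (cnj V) = cis (- defect_angle (a*b) u)"
    unfolding defect_angle_def V_def[symmetric]
    by (metis Arg_cnj cis_Arg complex_cnj_zero_iff complex_is_Real_iff zero_complex.sel(2))
  have "cis (half_kite_angle a b u + half_kite_angle b a u) = sgn (z1 * z2)"
    unfolding half_kite_angle_def z1_def[symmetric] z2_def[symmetric] cis_mult[symmetric] using z
    by (simp add: cis_Arg sgn_mult)
  also have "\<dots> = sgn (of_real L) * sgn (- cis (-u)) * (sgn (cnj V))^2"
    unfolding prod by (simp add: sgn_mult power2_eq_square)
  also have "\<dots> = cis (pi - u - 2 * defect_angle (a*b) u)"
  proof -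
    have "sgn (complex_of_real L) = 1" using L by (simp add: sgn_of_real)
    moreover have "sgn (- cis (-u)) = cis (pi - u)"
      by (simp add: sgn_minus cis_mult[symmetric] complex_eq_iff)
    ultimately show ?thesis unfolding sV by (simp add: power2_eq_square cis_mult)
  qed
  finally have "cis (half_kite_angle a b u + half_kite_angle b a u) = cis (pi - u - 2 * defect_angle (a*b) u)" .
  then show ?thesis
    by (rule cis_inj_0_2pi)
       (use half_kite_angle_bounds[OF a b(1) u] half_kite_angle_bounds[OF b a(1) u]
            defect_angle_bounds[OF ab u] u in auto)
qed

lemma half_kite_angle_pair_sum_less:
  assumes a: "0 < a'" "a' < a" "a < 1" and b: "0 < b'" "b' < b" "b < 1" and u: "0 < u" "u < pi"
  shows "half_kite_angle a b u + half_kite_angle b a u < half_kite_angle a' b' u + half_kite_angle b' a' u"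
proof -
  have "a' * b' < a * b" using a b by (simp add: mult_strict_mono)
  moreover have "0 < a' * b'" "a * b < 1" using a b by (simp_all add: mult_strict_mono' less_le_trans[of _ a 1])
  ultimately have "defect_angle (a'*b') u < defect_angle (a*b) u" using defect_angle_less u by blast
  then show ?thesis using half_kite_angle_pair_sum[of a b u] half_kite_angle_pair_sum[of a' b' u] a b u by simp
qed

section \<open>Kites\<close>

text \<open>Circles with centres \<open>cw\<close>, \<open>cu\<close> and radii \<open>rw\<close>, \<open>ru\<close> meeting at \<open>po \<noteq> pn\<close> with exterior
  intersection angle \<open>al\<close>; \<open>sg\<close> is the orientation of the kite \<open>cw, po, cu, pn\<close>.\<close>

definition kite :: "complex \<Rightarrow> real \<Rightarrow> complex \<Rightarrow> real \<Rightarrow> complex \<Rightarrow> complex \<Rightarrow> real \<Rightarrow> real \<Rightarrow> bool" where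
  "kite cw rw cu ru po pn al sg \<longleftrightarrow> 0 < rw \<and> 0 < ru \<and>
     cmod (po - cw) = rw \<and> cmod (po - cu) = ru \<and> cmod (pn - cw) = rw \<and> cmod (pn - cu) = ru \<and>
     po \<noteq> pn \<and> (cw - po) / (cu - po) = of_real (rw / ru) * cis (sg * al) \<and>
     (cu - pn) / (cw - pn) = of_real (ru / rw) * cis (sg * al)"

text \<open>The counterclockwise angle from \<open>u\<close> to \<open>v\<close>, in \<open>(0, 2\<pi>]\<close>.\<close>

definition ccw_angle :: "complex \<Rightarrow> complex \<Rightarrow> real" where
  "ccw_angle u v = Arg (- (v / u)) + pi"

lemma Im_one_div_one_minus: "Im (1 / (1 - X)) = Im X / (cmod (1 - X))^2"
  unfolding cmod_power2 by (simp add: Im_divide)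

lemma Im_div_one_minus: "Im (X / (1 - X)) = Im X / (cmod (1 - X))^2"
  unfolding cmod_power2 by (simp add: Im_divide algebra_simps)

lemma abs_Arg_cnj: "\<bar>Arg (cnj z)\<bar> = \<bar>Arg z\<bar>"
  by (simp add: Arg_cnj)

lemma eq_cnj_if_equidistant:
  assumes "cmod z = cmod w" "cmod (z - 1) = cmod (w - 1)" "Im z * Im w < 0"
  shows "w = cnj z"
proof -
  have re: "\<And>z. (cmod z)^2 - (cmod (z - 1))^2 = 2 * Re z - 1"
    unfolding cmod_power2 by (simp add: power2_eq_square algebra_simps)
  have Re: "Re z = Re w" using re[of z] re[of w] assms(1,2) by simp
  then have "(Im z)^2 = (Im w)^2" using assms(1) by (metis cmod_power2 add_left_cancel)
  then have "Im w = Im z \<or> Im w = - Im z" by (simp add: power2_eq_iff eq_commute)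
  moreover have "Im w \<noteq> Im z" using assms(3) by (metis not_square_less_zero)
  ultimately show ?thesis using Re by (simp add: complex_eq_iff)
qed

text \<open>Seen from \<open>cw\<close>, with \<open>cu - cw\<close> normalised to \<open>1\<close>, the two intersection points are mirror images
  of each other, and the orientation decides on which side \<open>po\<close> lies.\<close>

lemma kite_reflection:
  assumes k: "kite cw rw cu ru po pn al sg" and al: "0 < al" "al < pi" and sg: "sg = 1 \<or> sg = -1"
  shows "(pn - cw) / (cu - cw) = cnj ((po - cw) / (cu - cw))" "sg * Im ((po - cw) / (cu - cw)) < 0"
proof -
  have rw: "0 < rw" and ru: "0 < ru" and d: "cmod (po - cw) = rw" "cmod (po - cu) = ru"
    "cmod (pn - cw) = rw" "cmod (pn - cu) = ru"
    and rX: "(cw - po) / (cu - po) = of_real (rw / ru) * cis (sg * al)"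
    and rY: "(cu - pn) / (cw - pn) = of_real (ru / rw) * cis (sg * al)"
    using k unfolding kite_def by auto
  define X where "X = of_real (rw / ru) * cis (sg * al)"
  define Y where "Y = of_real (ru / rw) * cis (sg * al)"
  have sp: "0 < sin al" using al by (simp add: sin_gt_zero)
  have ImX: "sg * Im X > 0" and ImY: "sg * Im Y > 0"
    unfolding X_def Y_def using sg rw ru sp by auto
  then have X1: "X \<noteq> 1" and Y1: "Y \<noteq> 1" by auto
  have cupo: "cu - po \<noteq> 0" and cwpn: "cw - pn \<noteq> 0" using d rw ru by (auto simp: norm_minus_commute)
  have eX: "cw - po = X * (cu - po)" using rX cupo unfolding X_def[symmetric] by (simp add: field_simps)
  have eY: "cu - pn = Y * (cw - pn)" using rY cwpn unfolding Y_def[symmetric] by (simp add: field_simps)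
  have cucw: "cu - cw \<noteq> 0" using eX X1 cupo by (metis eq_iff_diff_eq_0 mult_cancel_right1)
  define ro where "ro = (po - cw) / (cu - cw)"
  define ri where "ri = (pn - cw) / (cu - cw)"
  have "po - cw = - X * (cu - po)" "cu - cw = (1 - X) * (cu - po)" using eX by (simp_all add: algebra_simps)
  then have "ro = - X / (1 - X)" unfolding ro_def using cupo by simp
  then have "sg * Im ro = - (sg * Im X / (cmod (1 - X))^2)" by (simp add: Im_div_one_minus)
  then have Imro: "sg * Im ro < 0" using ImX X1 by (simp add: divide_pos_pos)
  have "pn - cw = - (cw - pn)" "cu - cw = - (1 - Y) * (cw - pn)" "Y - 1 \<noteq> 0" "1 - Y \<noteq> 0"
    using eY Y1 by (simp_all add: algebra_simps)
  then have "ri = 1 / (1 - Y)" unfolding ri_def using cwpn cucw by (simp add: field_simps)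
  then have "sg * Im ri = sg * Im Y / (cmod (1 - Y))^2" by (simp add: Im_one_div_one_minus)
  then have Imri: "sg * Im ri > 0" using ImY Y1 by (simp add: divide_pos_pos)
  have "cmod ro = cmod ri" "cmod (ro - 1) = cmod (ri - 1)"
  proof -
    have "ro - 1 = (po - cu) / (cu - cw)" "ri - 1 = (pn - cu) / (cu - cw)"
      unfolding ro_def ri_def using cucw by (simp_all add: field_simps)
    then show "cmod ro = cmod ri" "cmod (ro - 1) = cmod (ri - 1)"
      unfolding ro_def ri_def using d by (simp_all add: norm_divide)
  qed
  moreover have "Im ro * Im ri < 0" using Imro Imri sg by (auto simp: mult_neg_pos mult_pos_neg)
  ultimately show "(pn - cw) / (cu - cw) = cnj ((po - cw) / (cu - cw))"
    using eq_cnj_if_equidistant unfolding ro_def ri_def by blast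
  show "sg * Im ((po - cw) / (cu - cw)) < 0" using Imro unfolding ro_def .
qed

lemma kite_abs_Arg_eq:
  assumes "kite cw rw cu ru po pn al sg" "0 < al" "al < pi" "sg = 1 \<or> sg = -1"
  shows "\<bar>Arg ((pn - cw) / (cu - cw))\<bar> = \<bar>Arg ((po - cw) / (cu - cw))\<bar>"
  using kite_reflection(1)[OF assms] abs_Arg_cnj by metis

lemma kite_ccw_angle:
  assumes k: "kite cw rw cu ru po pn al sg" and al: "0 < al" "al < pi" and sg: "sg = 1 \<or> sg = -1"
  defines "\<theta> \<equiv> Arg ((po - cw) / (cu - cw))"
  shows "ccw_angle (pn - cw) (po - cw) = (if sg = 1 then 2*pi - 2*\<bar>\<theta>\<bar> else 2*\<bar>\<theta>\<bar>)"
proof -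
  define ro where "ro = (po - cw) / (cu - cw)"
  have refl: "(pn - cw) / (cu - cw) = cnj ro" and Im: "sg * Im ro < 0"
    using kite_reflection[OF k al sg] unfolding ro_def by auto
  have ro: "ro = of_real (cmod ro) * cis \<theta>" "ro \<noteq> 0"
    using Im rcis_cmod_Arg[of ro] unfolding \<theta>_def ro_def[symmetric] rcis_def by auto
  have cucw: "cu \<noteq> cw" using ro(2) unfolding ro_def by auto
  have "(po - cw) / (pn - cw) = ro / ((pn - cw) / (cu - cw))"
    unfolding ro_def using cucw by simp
  also have "\<dots> = ro / cnj ro" unfolding refl ..
  also have "\<dots> = cis (2 * \<theta>)"
    by (subst (1 2) ro(1)) (use ro(2) in \<open>simp add: cis_cnj cis_divide\<close>)
  finally have q: "- ((po - cw) / (pn - cw)) = cis (2 * \<theta> + pi)" by (simp add: cis_mult[symmetric])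
  have \<theta>: "- pi < \<theta>" "\<theta> \<le> pi" unfolding \<theta>_def using Arg_bounded by auto
  show ?thesis
  proof (cases "sg = 1")
    case True
    then have "\<theta> < 0" using Im unfolding \<theta>_def ro_def by (simp add: Arg_neg_iff)
    then have "Arg (cis (2 * \<theta> + pi)) = 2 * \<theta> + pi" using \<theta> by (intro Arg_cis) auto
    then show ?thesis unfolding ccw_angle_def q using True \<open>\<theta> < 0\<close> by simp
  next
    case False
    then have "0 < \<theta>" "\<theta> < pi" using Im sg Arg_lt_pi[of ro] unfolding \<theta>_def ro_def by auto
    moreover have "cis (2 * \<theta> + pi) = cis (2 * \<theta> - pi)" by (simp add: cis_mult[symmetric] cis_divide[symmetric] complex_eq_iff)
    moreover have "Arg (cis (2 * \<theta> - pi)) = 2 * \<theta> - pi" using calculation by (intro Arg_cis) auto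
    ultimately show ?thesis unfolding ccw_angle_def q using False by simp
  qed
qed

lemma kite_ratio_transfer:
  fixes A B x y l C :: complex and Rw Ru rw ru :: real
  assumes "A / of_real Rw = (x / of_real rw) * l" "B / of_real Ru = (y / of_real ru) * l"
    "l \<noteq> 0" "y \<noteq> 0" "Rw \<noteq> 0" "Ru \<noteq> 0" "rw \<noteq> 0" "ru \<noteq> 0"
    "x / y = of_real (rw / ru) * C"
  shows "A / B = of_real (Rw / Ru) * C"
proof -
  have A: "A = of_real Rw * (x / of_real rw) * l" using assms(1,5) by (simp add: field_simps)
  have B: "B = of_real Ru * (y / of_real ru) * l" using assms(2,6) by (simp add: field_simps)
  have x: "x = of_real (rw / ru) * C * y" using assms(9,4) by (simp add: field_simps)
  show ?thesis unfolding A B x using assms(3-8) by (simp add: field_simps)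
qed

lemma kite_blaschke:
  assumes a: "cmod a < 1" and cw: "cmod cw + rw < 1" and cu: "cmod cu + ru < 1"
    and k: "kite cw rw cu ru po pn al sg"
  shows "kite (blaschke_centre a cw rw) (blaschke_radius a cw rw) (blaschke_centre a cu ru)
              (blaschke_radius a cu ru) (blaschke a po) (blaschke a pn) al sg"
proof -
  have rw: "0 < rw" and ru: "0 < ru" and d1: "cmod (po - cw) = rw" and d2: "cmod (po - cu) = ru"
    and d3: "cmod (pn - cw) = rw" and d4: "cmod (pn - cu) = ru" and ne: "po \<noteq> pn"
    and rX: "(cw - po) / (cu - po) = of_real (rw / ru) * cis (sg * al)"
    and rY: "(cu - pn) / (cw - pn) = of_real (ru / rw) * cis (sg * al)"
    using k unfolding kite_def by auto
  have pod: "cmod po < 1" by (rule circle_in_disc[OF cw d1])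
  have pnd: "cmod pn < 1" by (rule circle_in_disc[OF cw d3])
  have Rw: "0 < blaschke_radius a cw rw" by (rule blaschke_radius_pos[OF a cw rw])
  have Ru: "0 < blaschke_radius a cu ru" by (rule blaschke_radius_pos[OF a cu ru])
  have Aw: "blaschke_denom a cw rw \<noteq> 0" using blaschke_denom_pos[OF a cw] rw by simp
  have Au: "blaschke_denom a cu ru \<noteq> 0" using blaschke_denom_pos[OF a cu] ru by simp
  have do: "1 - cnj a * po \<noteq> 0" by (rule one_minus_cnj_mult_nonzero[OF a pod])
  have dn: "1 - cnj a * pn \<noteq> 0" by (rule one_minus_cnj_mult_nonzero[OF a pnd])
  have lo: "(1 - a * cnj po) / (1 - cnj a * po) \<noteq> 0" using do one_minus_cnj_mult_commute[OF do] by simp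
  have ln: "(1 - a * cnj pn) / (1 - cnj a * pn) \<noteq> 0" using dn one_minus_cnj_mult_commute[OF dn] by simp
  have cupo: "cu - po \<noteq> 0" and cwpn: "cw - pn \<noteq> 0" using d2 d3 rw ru by (auto simp: norm_minus_commute)
  have "cmod (blaschke a po - blaschke_centre a cw rw) = blaschke_radius a cw rw"
    "cmod (blaschke a po - blaschke_centre a cu ru) = blaschke_radius a cu ru"
    "cmod (blaschke a pn - blaschke_centre a cw rw) = blaschke_radius a cw rw"
    "cmod (blaschke a pn - blaschke_centre a cu ru) = blaschke_radius a cu ru"
    using blaschke_circle_iff[OF a cw _ pod] blaschke_circle_iff[OF a cu _ pod]
      blaschke_circle_iff[OF a cw _ pnd] blaschke_circle_iff[OF a cu _ pnd] rw ru d1 d2 d3 d4 by auto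
  moreover have "blaschke a po \<noteq> blaschke a pn" using blaschke_inj[OF a pod pnd] ne by blast
  moreover have "(blaschke_centre a cw rw - blaschke a po) / (blaschke_centre a cu ru - blaschke a po)
      = of_real (blaschke_radius a cw rw / blaschke_radius a cu ru) * cis (sg * al)"
    by (rule kite_ratio_transfer[OF blaschke_normal[OF a Aw do _ d1] blaschke_normal[OF a Au do _ d2]
          lo cupo _ _ _ _ rX]) (use rw ru Rw Ru in auto)
  moreover have "(blaschke_centre a cu ru - blaschke a pn) / (blaschke_centre a cw rw - blaschke a pn)
      = of_real (blaschke_radius a cu ru / blaschke_radius a cw rw) * cis (sg * al)"
    by (rule kite_ratio_transfer[OF blaschke_normal[OF a Au dn _ d4] blaschke_normal[OF a Aw dn _ d3]
          ln cwpn _ _ _ _ rY]) (use rw ru Rw Ru in auto)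
  ultimately show ?thesis unfolding kite_def using Rw Ru by simp
qed

lemma centred_kite_centre:
  assumes tw: "0 < tw" and rho: "0 < \<rho>" and qe: "cmod (q - e) = \<rho>"
    and rat: "(0 - q) / (e - q) = of_real (tw / \<rho>) * cis (sg * al)"
  shows "e = q * (1 - of_real (\<rho>/tw) * cis (- (sg * al)))"
proof -
  have "e - q \<noteq> 0" using qe rho by (auto simp: norm_minus_commute)
  then have "- q = of_real (tw/\<rho>) * cis (sg*al) * (e - q)" using rat by (simp add: field_simps)
  then have "of_real (\<rho>/tw) * cis (-(sg*al)) * (- q)
      = (of_real (\<rho>/tw) * of_real (tw/\<rho>)) * (cis (-(sg*al)) * cis (sg*al)) * (e - q)"
    by (simp add: mult_ac)
  also have "\<dots> = e - q"
  proof -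
    have "cis (-(sg*al)) * cis (sg*al) = 1" by (simp add: cis_mult)
    moreover have "complex_of_real (\<rho>/tw) * complex_of_real (tw/\<rho>) = 1"
      using tw rho by (simp flip: of_real_mult)
    ultimately show ?thesis by simp
  qed
  finally show ?thesis by (simp add: algebra_simps)
qed

lemma centred_kite_apex:
  assumes tw: "0 < tw" and rho: "0 < \<rho>" and al: "0 < al" "al < pi" and sg: "sg = 1 \<or> sg = -1"
    and q: "cmod q = tw" and qe: "cmod (q - e) = \<rho>"
    and rat: "(0 - q) / (e - q) = of_real (tw / \<rho>) * cis (sg * al)"
  shows "\<bar>Arg (q / e)\<bar> = Arg (Complex (1 - (\<rho>/tw) * cos al) ((\<rho>/tw) * sin al))"
    and "(cmod e)^2 = tw^2 - 2 * tw * \<rho> * cos al + \<rho>^2"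
proof -
  define X where "X = 1 - (\<rho>/tw) * cos al"
  define Y where "Y = (\<rho>/tw) * sin al"
  have Y: "0 < Y" unfolding Y_def using rho tw al by (simp add: sin_gt_zero)
  define W where "W = 1 - of_real (\<rho>/tw) * cis (- (sg * al))"
  have eW: "e = q * W" unfolding W_def by (rule centred_kite_centre[OF tw rho qe rat])
  have WC: "W = Complex X (sg * Y)"
    using sg unfolding W_def X_def Y_def by (auto simp: complex_eq_iff)
  have "q \<noteq> 0" "W \<noteq> 0" "W \<notin> \<real>" using q tw WC Y sg by (auto simp: complex_eq_iff complex_is_Real_iff)
  then have "\<bar>Arg (q / e)\<bar> = \<bar>Arg W\<bar>" unfolding eW by (simp add: Arg_inverse flip: inverse_eq_divide)
  also have "\<bar>Arg W\<bar> = Arg (Complex X Y)"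
  proof -
    have pos: "0 < Arg (Complex X Y)" using Y Arg_lt_pi[of "Complex X Y"] by simp
    have "W = Complex X Y \<or> W = cnj (Complex X Y)" using WC sg by (auto simp: complex_eq_iff)
    then show ?thesis using pos abs_Arg_cnj[of "Complex X Y"] by auto
  qed
  finally show "\<bar>Arg (q / e)\<bar> = Arg (Complex (1 - (\<rho>/tw) * cos al) ((\<rho>/tw) * sin al))"
    unfolding X_def Y_def .
  define c s where "c = cos al" and "s = sin al"
  have "(cmod W)^2 = X^2 + Y^2" unfolding WC cmod_power2 using sg by (auto simp: power2_eq_square)
  also have "\<dots> = 1 - 2 * (\<rho>/tw) * c + (\<rho>/tw)^2 * (c^2 + s^2)"
    unfolding X_def Y_def c_def[symmetric] s_def[symmetric]
    by (simp add: power2_eq_square algebra_simps add_divide_distrib)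
  also have "c^2 + s^2 = 1" unfolding c_def s_def by simp
  finally have "(cmod W)^2 = 1 - 2 * (\<rho>/tw) * cos al + (\<rho>/tw)^2" unfolding c_def by simp
  then have "(cmod e)^2 = tw^2 * (1 - 2 * (\<rho>/tw) * cos al + (\<rho>/tw)^2)"
    unfolding eW by (simp add: norm_mult power_mult_distrib q)
  also have "\<dots> = tw^2 - 2 * tw * \<rho> * cos al + \<rho>^2" using tw by (simp add: field_simps power2_eq_square)
  finally show "(cmod e)^2 = tw^2 - 2 * tw * \<rho> * cos al + \<rho>^2" .
qed

lemma centred_kite_radius:
  assumes tw: "0 < tw" "tw < 1" and tu: "0 < tu" "tu < 1" and al: "0 < al" "al < pi"
    and e: "(cmod e)^2 = tw^2 - 2 * tw * \<rho> * cos al + \<rho>^2"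
    and inv: "circle_invariant e \<rho> = tu / (1 + tu^2)"
  defines "M \<equiv> 1 + tu^2 - 2 * tu * tw * cos al"
  shows "0 < M" and "\<rho> = tu * (1 - tw^2) / M"
proof -
  have "tw * cos al < 1"
    using tw cos_less_1[OF al] by (smt (verit) mult_left_le_one_le mult_nonneg_nonpos mult_le_cancel_left1)
  then have "2 * tu * (tw * cos al) < 2 * tu" using tu by simp
  then show M: "0 < M"
    unfolding M_def using zero_le_power2[of "1 - tu"] by (simp add: power2_eq_square algebra_simps)
  have "\<rho> / (1 - tw^2 + 2 * tw * \<rho> * cos al) = tu / (1 + tu^2)"
    using inv unfolding circle_invariant_def e by (simp add: algebra_simps)
  moreover have "0 < tu / (1 + tu^2)" using tu by (simp add: add_pos_nonneg)
  moreover have "1 + tu^2 \<noteq> 0" by (smt (verit) zero_le_power2)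
  ultimately have "\<rho> * (1 + tu^2) = tu * (1 - tw^2 + 2 * tw * \<rho> * cos al)"
    by (simp add: divide_eq_eq eq_divide_eq mult.commute split: if_splits)
  then have "\<rho> * M = tu * (1 - tw^2)" unfolding M_def by (simp add: algebra_simps)
  then show "\<rho> = tu * (1 - tw^2) / M" using M by (simp add: field_simps)
qed

lemma kite_half_angle_centred:
  assumes tw: "0 < tw" "tw < 1" and tu: "0 < tu" "tu < 1" and al: "0 < al" "al < pi"
    and sg: "sg = 1 \<or> sg = -1" and rho: "0 < \<rho>" and q: "cmod q = tw" and qe: "cmod (q - e) = \<rho>"
    and rat: "(0 - q) / (e - q) = of_real (tw / \<rho>) * cis (sg * al)"
    and inv: "circle_invariant e \<rho> = tu / (1 + tu^2)"
  shows "\<bar>Arg (q / e)\<bar> = half_kite_angle tw tu al"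
proof -
  note apex = centred_kite_apex[OF tw(1) rho al sg q qe rat]
  define M where "M = 1 + tu^2 - 2 * tu * tw * cos al"
  have M: "0 < M" and rho_eq: "\<rho> = tu * (1 - tw^2) / M"
    unfolding M_def using centred_kite_radius[OF tw tu al apex(2) inv] by auto
  define k where "k = 1 / (tw * M)"
  have k: "0 < k" unfolding k_def using tw M by simp
  have "tw*(1+tu^2) - tu*cos al*(1+tw^2) = tw*M - tu*cos al*(1-tw^2)"
    unfolding M_def by (simp add: algebra_simps power2_eq_square)
  then have "1 - (\<rho>/tw) * cos al = k * (tw*(1+tu^2) - tu*cos al*(1+tw^2))"
    unfolding k_def rho_eq using M tw by (simp add: field_simps)
  moreover have "(\<rho>/tw) * sin al = k * (tu * sin al*(1-tw^2))"
    unfolding k_def rho_eq using M tw by (simp add: field_simps)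
  ultimately have "Complex (1 - (\<rho>/tw) * cos al) ((\<rho>/tw) * sin al)
      = of_real k * Complex (tw*(1+tu^2) - tu*cos al*(1+tw^2)) (tu * sin al*(1-tw^2))"
    by (simp add: complex_eq_iff)
  then show ?thesis unfolding apex(1) half_kite_angle_def using k by simp
qed

section \<open>Angle sums at an interior vertex\<close>

lemma cis_sum: "cis (sum f A) = (\<Prod>x\<in>A. cis (f x))"
  by (induction A rule: infinite_finite_induct) (auto simp: cis_mult[symmetric])

lemma cis_ccw_angle:
  assumes "u \<noteq> 0" "cmod v = cmod u"
  shows "cis (ccw_angle u v) = v / u"
proof -
  have "v \<noteq> 0" "cmod (v / u) = 1" using assms by (auto simp: norm_divide)
  then have "cis (Arg (- (v / u))) * cis pi = v / u"
    using assms(1) by (simp add: cis_Arg sgn_div_norm)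
  then show ?thesis unfolding ccw_angle_def cis_mult[symmetric] .
qed

lemma cis_eq_1_imp_Ints: "cis x = 1 \<Longrightarrow> x / (2*pi) \<in> \<int>"
proof -
  assume "cis x = 1"
  then have "exp (\<i> * of_real x) = 1" by (simp add: cis_conv_exp)
  then obtain n :: int where "x = of_int (2 * n) * pi" unfolding exp_eq_1 by auto
  then show ?thesis by simp
qed

lemma continuous_on_ccw_angle:
  assumes "continuous_on S u" "continuous_on S v" "\<And>s. s \<in> S \<Longrightarrow> u s \<noteq> 0"
    and "\<And>s. s \<in> S \<Longrightarrow> cmod (v s) = cmod (u s)" "\<And>s. s \<in> S \<Longrightarrow> v s \<noteq> u s"
  shows "continuous_on S (\<lambda>s. ccw_angle (u s) (v s))"
  unfolding ccw_angle_def
proof (intro continuous_intros assms)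
  fix s assume s: "s \<in> S"
  define z where "z = v s / u s"
  have "cmod z = 1" "z \<noteq> 1" unfolding z_def using assms(3-5)[OF s] by (auto simp: norm_divide)
  then show "- (v s / u s) \<notin> \<real>\<^sub>\<le>\<^sub>0"
    unfolding z_def[symmetric] by (auto simp: complex_nonpos_Reals_iff complex_eq_iff cmod_def power2_eq_1_iff)
qed (use assms(3) in blast)

text \<open>If the points \<open>X s (out f)\<close> and \<open>X s (inn f)\<close> run over the same points, the angle sum is
  \<open>2\<pi>\<close> times an integer; it varies continuously in \<open>s\<close>, so it is constant.\<close>

lemma ccw_angle_sum_homotopy:
  fixes X :: "real \<Rightarrow> 'b \<Rightarrow> complex" and out inn :: "'f \<Rightarrow> 'b"
  assumes fin: "finite Fs" and io: "inj_on out Fs" "inj_on inn Fs" "out ` Fs = inn ` Fs"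
    and cont: "\<And>b. b \<in> out ` Fs \<Longrightarrow> continuous_on {0..1} (\<lambda>s. X s b)"
    and nz: "\<And>s b. s \<in> {0..1} \<Longrightarrow> b \<in> out ` Fs \<Longrightarrow> X s b \<noteq> 0"
    and eqn: "\<And>s f. s \<in> {0..1} \<Longrightarrow> f \<in> Fs \<Longrightarrow> cmod (X s (out f)) = cmod (X s (inn f))"
    and ne: "\<And>s f. s \<in> {0..1} \<Longrightarrow> f \<in> Fs \<Longrightarrow> X s (out f) \<noteq> X s (inn f)"
  shows "(\<Sum>f\<in>Fs. ccw_angle (X 0 (inn f)) (X 0 (out f))) = (\<Sum>f\<in>Fs. ccw_angle (X 1 (inn f)) (X 1 (out f)))"
proof -
  define h where "h s = (\<Sum>f\<in>Fs. ccw_angle (X s (inn f)) (X s (out f))) / (2*pi)" for s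
  have inn: "inn f \<in> out ` Fs" if "f \<in> Fs" for f using io(3) that by blast
  have "h s \<in> \<int>" if s: "s \<in> {0..1}" for s
  proof -
    have "cis (\<Sum>f\<in>Fs. ccw_angle (X s (inn f)) (X s (out f))) = (\<Prod>f\<in>Fs. X s (out f) / X s (inn f))"
      unfolding cis_sum using cis_ccw_angle nz[OF s] eqn[OF s] inn by (intro prod.cong) auto
    also have "\<dots> = prod (X s) (out ` Fs) / prod (X s) (inn ` Fs)"
      by (simp add: prod_dividef prod.reindex[OF io(1)] prod.reindex[OF io(2)])
    also have "\<dots> = 1" using fin nz[OF s] unfolding io(3) by simp
    finally show ?thesis unfolding h_def by (rule cis_eq_1_imp_Ints)
  qed
  moreover have "continuous_on {0..1} h"
    unfolding h_def
    by (intro continuous_intros continuous_on_ccw_angle cont nz eqn ne inn) (auto simp: eqn ne)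
  ultimately have "h constant_on {0..1}"
    by (intro continuous_discrete_range_constant)
       (auto intro!: exI[of _ 1] Ints_nonzero_abs_ge1 simp: Ints_diff)
  then have "h 0 = h 1" unfolding constant_on_def by force
  then show ?thesis unfolding h_def by simp
qed

lemma scaled_in_disc: "cmod a < 1 \<Longrightarrow> s \<in> {0..1} \<Longrightarrow> cmod (of_real s * a) < 1"
  by (simp add: norm_mult) (smt (verit) mult_left_le_one_le norm_ge_zero)

lemma continuous_on_blaschke_path:
  assumes a: "cmod a < 1" and cr: "cmod c + r < 1" and r: "0 \<le> r" and z: "cmod z < 1"
  shows "continuous_on {0..1} (\<lambda>s. blaschke (of_real s * a) z - blaschke_centre (of_real s * a) c r)"
proof -
  have "1 - cnj (of_real s * a) * z \<noteq> 0" "complex_of_real (blaschke_denom (of_real s * a) c r) \<noteq> 0"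
    if "s \<in> {0..1}" for s
    using one_minus_cnj_mult_nonzero[OF scaled_in_disc[OF a that] z]
      blaschke_denom_pos[OF scaled_in_disc[OF a that] cr r] by auto
  then show ?thesis
    unfolding Moebius_function_simple blaschke_centre_def blaschke_denom_def
    by (intro continuous_intros) auto
qed

lemma kite_ccw_angle_hyp:
  assumes cw: "cmod cw + rw < 1" and cu: "cmod cu + ru < 1" and k: "kite cw rw cu ru po pn al sg"
    and al: "0 < al" "al < pi" and sg: "sg = 1 \<or> sg = -1"
  defines "a \<equiv> hyp_centre cw rw"
  shows "ccw_angle (blaschke a pn - blaschke_centre a cw rw) (blaschke a po - blaschke_centre a cw rw)
       = (if sg = 1 then 2*pi - 2 * half_kite_angle (centred_radius cw rw) (centred_radius cu ru) al
          else 2 * half_kite_angle (centred_radius cw rw) (centred_radius cu ru) al)"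
proof -
  have rw: "0 < rw" and ru: "0 < ru" using k unfolding kite_def by auto
  have a: "cmod a < 1" and a0: "blaschke_centre a cw rw = 0"
    unfolding a_def using hyp_centre_in_disc[OF cw rw] blaschke_centre_hyp_centre[OF cw rw] by auto
  define e where "e = blaschke_centre a cu ru"
  define \<rho> where "\<rho> = blaschke_radius a cu ru"
  have "centred_radius cw rw = blaschke_radius a cw rw" unfolding centred_radius_def a_def ..
  then have k': "kite 0 (centred_radius cw rw) e \<rho> (blaschke a po) (blaschke a pn) al sg"
    using kite_blaschke[OF a cw cu k] unfolding a0 e_def \<rho>_def by simp
  have inv: "circle_invariant e \<rho> = centred_radius cu ru / (1 + (centred_radius cu ru)^2)"
    unfolding e_def \<rho>_def
    using circle_invariant_blaschke_disc[OF a cu ru] circle_invariant_eq_centred_radius[OF cu ru] by simp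
  have "\<bar>Arg (blaschke a po / e)\<bar> = half_kite_angle (centred_radius cw rw) (centred_radius cu ru) al"
    by (rule kite_half_angle_centred[OF _ _ _ _ al sg _ _ _ _ inv])
       (use centred_radius_bounds[OF cw rw] centred_radius_bounds[OF cu ru] k' in \<open>auto simp: kite_def\<close>)
  then show ?thesis using kite_ccw_angle[OF k' al sg] unfolding a0 by simp
qed

lemma ccw_angle_sum_blaschke:
  fixes Fs :: "'f set" and out inn :: "'f \<Rightarrow> 'v" and p :: "'v \<Rightarrow> complex"
  assumes fin: "finite Fs" and io: "inj_on out Fs" "inj_on inn Fs" "out ` Fs = inn ` Fs"
    and cw: "cmod cw + rw < 1" and rw: "0 < rw" and a: "cmod a < 1"
    and on: "\<And>f. f \<in> Fs \<Longrightarrow> cmod (p (out f) - cw) = rw \<and> cmod (p (inn f) - cw) = rw \<and> p (out f) \<noteq> p (inn f)"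
  shows "(\<Sum>f\<in>Fs. ccw_angle (p (inn f) - cw) (p (out f) - cw))
       = (\<Sum>f\<in>Fs. ccw_angle (blaschke a (p (inn f)) - blaschke_centre a cw rw)
                           (blaschke a (p (out f)) - blaschke_centre a cw rw))"
proof -
  define X where "X s b = blaschke (of_real s * a) (p b) - blaschke_centre (of_real s * a) cw rw" for s b
  have inn: "inn f \<in> out ` Fs" if "f \<in> Fs" for f using io(3) that by blast
  have on_circle: "cmod (p b - cw) = rw" "cmod (p b) < 1" if "b \<in> out ` Fs" for b
    using on circle_in_disc[OF cw] that by blast+
  have X: "cmod (X s b) = blaschke_radius (of_real s * a) cw rw" "X s b \<noteq> 0"
    if s: "s \<in> {0..1}" and b: "b \<in> out ` Fs" for s b
  proof -
    show "cmod (X s b) = blaschke_radius (of_real s * a) cw rw"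
      unfolding X_def using blaschke_circle_iff[OF scaled_in_disc[OF a s] cw _ on_circle(2)[OF b]]
        on_circle(1)[OF b] rw by simp
    then show "X s b \<noteq> 0" using blaschke_radius_pos[OF scaled_in_disc[OF a s] cw rw] by auto
  qed
  have "(\<Sum>f\<in>Fs. ccw_angle (X 0 (inn f)) (X 0 (out f))) = (\<Sum>f\<in>Fs. ccw_angle (X 1 (inn f)) (X 1 (out f)))"
  proof (rule ccw_angle_sum_homotopy[OF fin io])
    show "continuous_on {0..1} (\<lambda>s. X s b)" if "b \<in> out ` Fs" for b
      unfolding X_def using continuous_on_blaschke_path[OF a cw _ on_circle(2)[OF that]] rw by simp
    show "X s (out f) \<noteq> X s (inn f)" if "s \<in> {0..1}" "f \<in> Fs" for s f
      using on[OF that(2)] blaschke_inj[OF scaled_in_disc[OF a that(1)]] on_circle(2) inn[OF that(2)] that(2)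
      unfolding X_def by auto
  qed (use X inn in auto)
  then show ?thesis unfolding X_def by (simp add: Moebius_function_simple)
qed

text \<open>The angle condition of a circle pattern holds for the hyperbolic kite angles: the disc
  automorphisms \<open>blaschke (s a)\<close>, \<open>0 \<le> s \<le> 1\<close>, deform the Euclidean kites at \<open>cw\<close> into the kites
  of the hyperbolically centred circle without changing the angle sum.\<close>

lemma hyp_kite_angle_sum:
  fixes Fs :: "'f set" and out inn opp :: "'f \<Rightarrow> 'v" and c p :: "'v \<Rightarrow> complex"
    and r :: "'v \<Rightarrow> real" and al :: "'f \<Rightarrow> real"
  assumes fin: "finite Fs" and io: "inj_on out Fs" "inj_on inn Fs" "out ` Fs = inn ` Fs"
    and cw: "cmod cw + rw < 1"
    and cu: "\<And>f. f \<in> Fs \<Longrightarrow> cmod (c (opp f)) + r (opp f) < 1"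
    and al: "\<And>f. f \<in> Fs \<Longrightarrow> 0 < al f" "\<And>f. f \<in> Fs \<Longrightarrow> al f < pi" and sg: "sg = 1 \<or> sg = -1"
    and k: "\<And>f. f \<in> Fs \<Longrightarrow> kite cw rw (c (opp f)) (r (opp f)) (p (out f)) (p (inn f)) (al f) sg"
    and euclidean: "(\<Sum>f\<in>Fs. 2 * \<bar>Arg ((p (out f) - cw) / (c (opp f) - cw))\<bar>) = 2 * pi"
  shows "(\<Sum>f\<in>Fs. 2 * half_kite_angle (centred_radius cw rw) (centred_radius (c (opp f)) (r (opp f))) (al f))
       = 2 * pi"
proof (cases "Fs = {}")
  case False
  then obtain f0 where "f0 \<in> Fs" by blast
  then have rw: "0 < rw" using k unfolding kite_def by blast
  define a where "a = hyp_centre cw rw"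
  define S where "S x = (if sg = 1 then 2*pi - 2*x else 2*x)" for x :: real
  have "(\<Sum>f\<in>Fs. S \<bar>Arg ((p (out f) - cw) / (c (opp f) - cw))\<bar>)
      = (\<Sum>f\<in>Fs. ccw_angle (p (inn f) - cw) (p (out f) - cw))"
    unfolding S_def using kite_ccw_angle[OF k al(1,2) sg] by (intro sum.cong refl) simp
  also have "\<dots> = (\<Sum>f\<in>Fs. ccw_angle (blaschke a (p (inn f)) - blaschke_centre a cw rw)
                                    (blaschke a (p (out f)) - blaschke_centre a cw rw))"
    by (rule ccw_angle_sum_blaschke[OF fin io cw rw])
       (use k hyp_centre_in_disc[OF cw rw] in \<open>auto simp: a_def kite_def\<close>)
  also have "\<dots> = (\<Sum>f\<in>Fs. S (half_kite_angle (centred_radius cw rw) (centred_radius (c (opp f)) (r (opp f))) (al f)))"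
    unfolding S_def a_def using kite_ccw_angle_hyp[OF cw cu k al(1,2) sg] by (intro sum.cong refl) simp
  finally show ?thesis using euclidean unfolding S_def
    by (cases "sg = 1") (simp_all add: sum_subtractf sum_distrib_left)
qed (use euclidean in simp)

section \<open>The star of a white vertex\<close>

lemma b_quad_graphD:
  assumes "b_quad_graph F K"
  shows "finite F" "\<And>f. f \<in> F \<Longrightarrow> length (K f) = 4 \<and> distinct (K f)"
    "white_verts F K \<inter> black_verts F K = {}"
    "\<And>f g e. f \<in> F \<Longrightarrow> g \<in> F \<Longrightarrow> e \<in> dedges K f \<Longrightarrow> e \<in> dedges K g \<Longrightarrow> f = g"
  using assms unfolding b_quad_graph_def by (elim conjE; simp only: ball_simps; blast)+

lemma corners_white_black:
  assumes "f \<in> F"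
  shows "K f ! 0 \<in> white_verts F K" "K f ! 2 \<in> white_verts F K"
    "K f ! 1 \<in> black_verts F K" "K f ! 3 \<in> black_verts F K"
  using assms unfolding white_verts_def black_verts_def by blast+

lemma white_corners_distinct: "b_quad_graph F K \<Longrightarrow> f \<in> F \<Longrightarrow> K f ! 0 \<noteq> K f ! 2"
  using b_quad_graphD(2) by (fastforce simp: nth_eq_iff_index_eq)

lemma finite_white_verts:
  assumes "b_quad_graph F K"
  shows "finite (white_verts F K)"
proof -
  have "white_verts F K = (\<lambda>f. K f ! 0) ` F \<union> (\<lambda>f. K f ! 2) ` F" unfolding white_verts_def by auto
  then show ?thesis using b_quad_graphD(1)[OF assms] by simp
qed

lemma dedges_eq:
  "dedges K f = {(K f!0, K f!1), (K f!1, K f!2), (K f!2, K f!3), (K f!3, K f!0)}"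
proof -
  have m4: "((0::nat)+1) mod 4 = 1" "((1::nat)+1) mod 4 = 2" "((2::nat)+1) mod 4 = 3" "((3::nat)+1) mod 4 = 0"
    by arith+
  have "dedges K f = (\<lambda>i. (K f ! i, K f ! ((i + 1) mod 4))) ` {..<4}" unfolding dedges_def by auto
  also have "{..<4::nat} = {0, 1, 2, 3}" by (auto simp: numeral_eq_Suc less_Suc_eq)
  finally show ?thesis by (simp only: image_insert image_empty m4)
qed

definition white_star :: "'f set \<Rightarrow> ('f \<Rightarrow> 'v list) \<Rightarrow> 'v \<Rightarrow> 'f set" where
  "white_star F K w = {f \<in> F. K f ! 0 = w \<or> K f ! 2 = w}"

definition opp_white :: "('f \<Rightarrow> 'v list) \<Rightarrow> 'f \<Rightarrow> 'v \<Rightarrow> 'v" where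
  "opp_white K f w = (if K f ! 0 = w then K f ! 2 else K f ! 0)"

definition next_black :: "('f \<Rightarrow> 'v list) \<Rightarrow> 'f \<Rightarrow> 'v \<Rightarrow> 'v" where
  "next_black K f w = (if K f ! 0 = w then K f ! 1 else K f ! 3)"

definition prev_black :: "('f \<Rightarrow> 'v list) \<Rightarrow> 'f \<Rightarrow> 'v \<Rightarrow> 'v" where
  "prev_black K f w = (if K f ! 0 = w then K f ! 3 else K f ! 1)"

lemma white_star_edges:
  assumes "f \<in> white_star F K w"
  shows "(w, next_black K f w) \<in> dedges K f" "(prev_black K f w, w) \<in> dedges K f"
  using assms unfolding white_star_def next_black_def prev_black_def dedges_eq by auto

lemma white_star_edge_position:
  assumes bq: "b_quad_graph F K" and w: "w \<in> white_verts F K" and g: "g \<in> F"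
  shows "(b, w) \<in> dedges K g \<Longrightarrow> g \<in> white_star F K w \<and> b = prev_black K g w"
    and "(w, b) \<in> dedges K g \<Longrightarrow> g \<in> white_star F K w \<and> b = next_black K g w"
proof -
  have "w \<noteq> K g ! 1" "w \<noteq> K g ! 3" using w b_quad_graphD(3)[OF bq] corners_white_black[OF g, where K=K] by auto
  moreover have "K g ! 0 \<noteq> K g ! 2" by (rule white_corners_distinct[OF bq g])
  moreover note g
  ultimately show "(b, w) \<in> dedges K g \<Longrightarrow> g \<in> white_star F K w \<and> b = prev_black K g w"
    and "(w, b) \<in> dedges K g \<Longrightarrow> g \<in> white_star F K w \<and> b = next_black K g w"
    unfolding dedges_eq white_star_def prev_black_def next_black_def by auto
qed

text \<open>Around an interior white vertex every edge is shared by two faces, so the black corners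
  following \<open>w\<close> are exactly those preceding it.\<close>

lemma interior_white_star_perm:
  assumes bq: "b_quad_graph F K" and w: "w \<in> white_verts F K" "w \<in> interior_verts F K"
  shows "inj_on (\<lambda>f. next_black K f w) (white_star F K w)" "inj_on (\<lambda>f. prev_black K f w) (white_star F K w)"
    "(\<lambda>f. next_black K f w) ` white_star F K w = (\<lambda>f. prev_black K f w) ` white_star F K w"
proof -
  have star: "white_star F K w \<subseteq> F" unfolding white_star_def by auto
  note coh = b_quad_graphD(4)[OF bq]
  show "inj_on (\<lambda>f. next_black K f w) (white_star F K w)"
  proof (rule inj_onI)
    fix f g assume f: "f \<in> white_star F K w" and g: "g \<in> white_star F K w"
      and "next_black K f w = next_black K g w"
    then have "(w, next_black K f w) \<in> dedges K g" using white_star_edges(1)[OF g] by simp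
    then show "f = g" using coh white_star_edges(1)[OF f] f g star by blast
  qed
  show "inj_on (\<lambda>f. prev_black K f w) (white_star F K w)"
  proof (rule inj_onI)
    fix f g assume f: "f \<in> white_star F K w" and g: "g \<in> white_star F K w"
      and "prev_black K f w = prev_black K g w"
    then have "(prev_black K f w, w) \<in> dedges K g" using white_star_edges(2)[OF g] by simp
    then show "f = g" using coh white_star_edges(2)[OF f] f g star by blast
  qed
  have inner: "\<not> boundary_edge F K (w, b)" "\<not> boundary_edge F K (b, w)" for b
    using w(2) unfolding interior_verts_def boundary_verts_def by blast+
  show "(\<lambda>f. next_black K f w) ` white_star F K w = (\<lambda>f. prev_black K f w) ` white_star F K w"
  proof (intro equalityI image_subsetI)
    fix f assume f: "f \<in> white_star F K w"
    obtain g where "g \<in> F" "(next_black K f w, w) \<in> dedges K g"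
      using inner(1)[of "next_black K f w"] white_star_edges(1)[OF f] f star
      unfolding boundary_edge_def by auto
    then show "next_black K f w \<in> (\<lambda>f. prev_black K f w) ` white_star F K w"
      using white_star_edge_position(1)[OF bq w(1)] by blast
  next
    fix f assume f: "f \<in> white_star F K w"
    obtain g where "g \<in> F" "(w, prev_black K f w) \<in> dedges K g"
      using inner(2)[of "prev_black K f w"] white_star_edges(2)[OF f] f star
      unfolding boundary_edge_def by auto
    then show "prev_black K f w \<in> (\<lambda>f. next_black K f w) ` white_star F K w"
      using white_star_edge_position(2)[OF bq w(1)] by blast
  qed
qed

lemma circle_subset_disc_bound:
  assumes r: "0 < r" and sub: "{z. cmod (z - c) = r} \<subseteq> {z. cmod z < 1}"
  shows "cmod c + r < 1"
proof -
  define u where "u = (if c = 0 then 1 else c / of_real (cmod c))"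
  have u: "cmod u = 1" unfolding u_def by (simp add: norm_divide)
  have "c + of_real r * u = of_real (cmod c + r) * u"
    unfolding u_def by (cases "c = 0") (simp_all add: field_simps)
  moreover have "cmod (c + of_real r * u - c) = r" using r u by (simp add: norm_mult)
  ultimately have "cmod (complex_of_real (cmod c + r) * u) < 1" using sub by auto
  then show ?thesis using u r by (simp add: norm_mult del: of_real_add)
qed

lemma circle_pattern_radius_pos:
  "circle_pattern F K al c r p \<Longrightarrow> w \<in> white_verts F K \<Longrightarrow> 0 < r w"
  unfolding circle_pattern_def by (elim conjE) blast

lemma circle_pattern_angle_condition:
  assumes "circle_pattern F K al c r p" "w \<in> white_verts F K" "w \<in> interior_verts F K"
  shows "(\<Sum>f\<in>{f\<in>F. K f ! 0 = w}. kite_angle K c p f 0) +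
         (\<Sum>f\<in>{f\<in>F. K f ! 2 = w}. kite_angle K c p f 2) = 2 * pi"
  using assms unfolding circle_pattern_def by (elim conjE) blast

lemma circle_pattern_kites:
  assumes "circle_pattern F K al c r p"
  obtains s where "s = 1 \<or> s = -1"
    and "\<And>f. f \<in> F \<Longrightarrow>
      kite (c (K f!0)) (r (K f!0)) (c (K f!2)) (r (K f!2)) (p (K f!1)) (p (K f!3)) (al f) s \<and>
      kite (c (K f!2)) (r (K f!2)) (c (K f!0)) (r (K f!0)) (p (K f!3)) (p (K f!1)) (al f) s"
proof -
  obtain s where s: "s \<in> {1, -1}" and sf: "\<forall>f\<in>F.
        (let w1 = K f ! 0; b1 = K f ! 1; w2 = K f ! 2; b2 = K f ! 3 in
           cmod (p b1 - c w1) = r w1 \<and> cmod (p b1 - c w2) = r w2 \<and>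
           cmod (p b2 - c w1) = r w1 \<and> cmod (p b2 - c w2) = r w2 \<and>
           p b1 \<noteq> p b2 \<and>
           (c w1 - p b1) / (c w2 - p b1) = complex_of_real (r w1 / r w2) * cis (s * al f) \<and>
           (c w2 - p b2) / (c w1 - p b2) = complex_of_real (r w2 / r w1) * cis (s * al f))"
    using assms unfolding circle_pattern_def by blast
  show thesis
  proof (rule that)
    show "s = 1 \<or> s = -1" using s by auto
    fix f assume f: "f \<in> F"
    have "0 < r (K f!0)" "0 < r (K f!2)"
      using circle_pattern_radius_pos[OF assms] corners_white_black[OF f] by auto
    then show "kite (c (K f!0)) (r (K f!0)) (c (K f!2)) (r (K f!2)) (p (K f!1)) (p (K f!3)) (al f) s \<and>
      kite (c (K f!2)) (r (K f!2)) (c (K f!0)) (r (K f!0)) (p (K f!3)) (p (K f!1)) (al f) s"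
      using bspec[OF sf f] unfolding kite_def Let_def by auto
  qed
qed

lemma circle_pattern_white_star_kites:
  assumes bq: "b_quad_graph F K" and cp: "circle_pattern F K al c r p"
  obtains s where "s = 1 \<or> s = -1" and "\<And>f. f \<in> white_star F K w \<Longrightarrow>
    kite (c w) (r w) (c (opp_white K f w)) (r (opp_white K f w)) (p (next_black K f w)) (p (prev_black K f w)) (al f) s"
proof -
  obtain s where s: "s = 1 \<or> s = -1" and k: "\<And>f. f \<in> F \<Longrightarrow>
      kite (c (K f!0)) (r (K f!0)) (c (K f!2)) (r (K f!2)) (p (K f!1)) (p (K f!3)) (al f) s \<and>
      kite (c (K f!2)) (r (K f!2)) (c (K f!0)) (r (K f!0)) (p (K f!3)) (p (K f!1)) (al f) s"
    using circle_pattern_kites[OF cp] by blast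
  show thesis
  proof (rule that[OF s])
    fix f assume "f \<in> white_star F K w"
    then show "kite (c w) (r w) (c (opp_white K f w)) (r (opp_white K f w)) (p (next_black K f w))
        (p (prev_black K f w)) (al f) s"
      using k white_corners_distinct[OF bq]
      unfolding white_star_def opp_white_def next_black_def prev_black_def by auto
  qed
qed

text \<open>At position \<open>2\<close>, \<open>kite_angle\<close> is measured towards the black corner at position \<open>1\<close>, which
  precedes \<open>w\<close>; by the symmetry of the kite this is also the angle towards the one following it.\<close>

lemma circle_pattern_kite_angle_2:
  assumes adm: "admissible F K al" and cp: "circle_pattern F K al c r p" and f: "f \<in> F"
  shows "kite_angle K c p f 2 = 2 * \<bar>Arg ((p (K f ! 3) - c (K f ! 2)) / (c (K f ! 0) - c (K f ! 2)))\<bar>"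
proof -
  obtain s where s: "s = 1 \<or> s = -1" and k: "\<And>f. f \<in> F \<Longrightarrow>
      kite (c (K f!0)) (r (K f!0)) (c (K f!2)) (r (K f!2)) (p (K f!1)) (p (K f!3)) (al f) s \<and>
      kite (c (K f!2)) (r (K f!2)) (c (K f!0)) (r (K f!0)) (p (K f!3)) (p (K f!1)) (al f) s"
    using circle_pattern_kites[OF cp] by blast
  have "0 < al f" "al f < pi" using adm f unfolding admissible_def by auto
  then show ?thesis
    unfolding kite_angle_def using kite_abs_Arg_eq[OF conjunct2[OF k[OF f]] _ _ s] by simp
qed

lemma circle_pattern_angle_sum:
  assumes bq: "b_quad_graph F K" and adm: "admissible F K al" and cp: "circle_pattern F K al c r p"
    and w: "w \<in> white_verts F K" "w \<in> interior_verts F K"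
  shows "(\<Sum>f\<in>white_star F K w. 2 * \<bar>Arg ((p (next_black K f w) - c w) / (c (opp_white K f w) - c w))\<bar>) = 2 * pi"
proof -
  define A where "A f = 2 * \<bar>Arg ((p (next_black K f w) - c w) / (c (opp_white K f w) - c w))\<bar>" for f
  define F0 F2 where "F0 = {f\<in>F. K f ! 0 = w}" and "F2 = {f\<in>F. K f ! 2 = w}"
  have "white_star F K w = F0 \<union> F2" unfolding white_star_def F0_def F2_def by blast
  moreover have "F0 \<inter> F2 = {}"
  proof -
    have False if "f \<in> F0" "f \<in> F2" for f
      using that white_corners_distinct[OF bq, of f] unfolding F0_def F2_def by auto
    then show ?thesis by blast
  qed
  moreover have "finite F0" "finite F2" unfolding F0_def F2_def using b_quad_graphD(1)[OF bq] by simp_all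
  ultimately have "sum A (white_star F K w) = sum A F0 + sum A F2" by (simp add: sum.union_disjoint)
  also have "sum A F0 = (\<Sum>f\<in>F0. kite_angle K c p f 0)"
  proof (rule sum.cong[OF refl])
    fix f assume "f \<in> F0"
    then have "K f ! 0 = w" unfolding F0_def by blast
    then show "A f = kite_angle K c p f 0"
      unfolding A_def kite_angle_def next_black_def opp_white_def by (simp add: numeral_2_eq_2)
  qed
  also have "sum A F2 = (\<Sum>f\<in>F2. kite_angle K c p f 2)"
  proof (rule sum.cong[OF refl])
    fix f assume "f \<in> F2"
    then have f: "f \<in> F" "K f ! 2 = w" "K f ! 0 \<noteq> w"
      unfolding F2_def using white_corners_distinct[OF bq] by auto
    then show "A f = kite_angle K c p f 2"
      unfolding A_def next_black_def opp_white_def circle_pattern_kite_angle_2[OF adm cp f(1)] by simp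
  qed
  finally show ?thesis
    using circle_pattern_angle_condition[OF cp w] unfolding A_def F0_def F2_def by simp
qed

definition hyp_angle_sum :: "'f set \<Rightarrow> ('f \<Rightarrow> 'v list) \<Rightarrow> ('f \<Rightarrow> real) \<Rightarrow> ('v \<Rightarrow> real) \<Rightarrow> 'v \<Rightarrow> real" where
  "hyp_angle_sum F K al t w =
     (\<Sum>f\<in>white_star F K w. 2 * half_kite_angle (t w) (t (opp_white K f w)) (al f))"

lemma circle_pattern_hyp_angle_sum:
  assumes bq: "b_quad_graph F K" and adm: "admissible F K al" and cp: "circle_pattern F K al c r p"
    and disc: "\<forall>w\<in>white_verts F K. cmod (c w) + r w < 1"
    and w: "w \<in> white_verts F K" "w \<in> interior_verts F K"
  shows "hyp_angle_sum F K al (\<lambda>v. centred_radius (c v) (r v)) w = 2 * pi"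
proof -
  obtain s where s: "s = 1 \<or> s = -1" and k: "\<And>f. f \<in> white_star F K w \<Longrightarrow>
    kite (c w) (r w) (c (opp_white K f w)) (r (opp_white K f w)) (p (next_black K f w)) (p (prev_black K f w)) (al f) s"
    using circle_pattern_white_star_kites[OF bq cp] by blast
  have star: "white_star F K w \<subseteq> F" unfolding white_star_def by auto
  have "opp_white K f w \<in> white_verts F K" if "f \<in> white_star F K w" for f
    using that corners_white_black[of f F K] unfolding white_star_def opp_white_def by auto
  then show ?thesis
    unfolding hyp_angle_sum_def
    using hyp_kite_angle_sum[OF _ interior_white_star_perm[OF bq w] _ _ _ _ s k
        circle_pattern_angle_sum[OF bq adm cp w]]
      finite_subset[OF star b_quad_graphD(1)[OF bq]] disc w(1) star adm
    unfolding admissible_def by (auto simp: subset_iff)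
qed

section \<open>The maximum principle\<close>

lemma face_angle_sum_le:
  fixes t t' :: "'v \<Rightarrow> real"
  assumes ne: "wa \<noteq> wb"
    and t: "\<And>w. w \<in> {wa, wb} \<Longrightarrow> 0 < t w \<and> t w < 1 \<and> 0 < t' w \<and> t' w < 1"
    and al: "0 < al" "al < pi"
    and V: "\<And>w. w \<in> {wa, wb} \<Longrightarrow> w \<in> V \<Longrightarrow> t' w < t w"
      "\<And>w. w \<in> {wa, wb} \<Longrightarrow> w \<notin> V \<Longrightarrow> t w \<le> t' w"
  defines "S \<equiv> \<lambda>t. (\<Sum>w\<in>{w\<in>V. wa = w \<or> wb = w}. 2 * half_kite_angle (t w) (t (if wa = w then wb else wa)) al)"
  shows "S t \<le> S t'" and "wa \<in> V \<or> wb \<in> V \<Longrightarrow> S t < S t'"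
proof -
  have ta: "0 < t wa" "t wa < 1" "0 < t' wa" "t' wa < 1" and tb: "0 < t wb" "t wb < 1" "0 < t' wb" "t' wb < 1"
    using t[of wa] t[of wb] by auto
  consider "wa \<in> V" "wb \<in> V" | "wa \<in> V" "wb \<notin> V" | "wa \<notin> V" "wb \<in> V" | "wa \<notin> V" "wb \<notin> V" by blast
  then have "S t \<le> S t' \<and> (wa \<in> V \<or> wb \<in> V \<longrightarrow> S t < S t')"
  proof cases
    case 1
    then have "{w\<in>V. wa = w \<or> wb = w} = {wa, wb}" by auto
    moreover have "half_kite_angle (t wa) (t wb) al + half_kite_angle (t wb) (t wa) al
        < half_kite_angle (t' wa) (t' wb) al + half_kite_angle (t' wb) (t' wa) al"
      by (rule half_kite_angle_pair_sum_less) (use ta tb V(1) 1 al in auto)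
    ultimately show ?thesis unfolding S_def using ne by simp
  next
    case 2
    then have "{w\<in>V. wa = w \<or> wb = w} = {wa}" by auto
    moreover have "half_kite_angle (t wa) (t wb) al < half_kite_angle (t' wa) (t' wb) al"
      by (rule half_kite_angle_less) (use ta tb V 2 al in auto)
    ultimately show ?thesis unfolding S_def by simp
  next
    case 3
    then have "{w\<in>V. wa = w \<or> wb = w} = {wb}" by auto
    moreover have "half_kite_angle (t wb) (t wa) al < half_kite_angle (t' wb) (t' wa) al"
      by (rule half_kite_angle_less) (use ta tb V 3 al in auto)
    ultimately show ?thesis unfolding S_def using ne by simp
  next
    case 4
    then have "{w\<in>V. wa = w \<or> wb = w} = {}" by auto
    then show ?thesis unfolding S_def using 4 by (simp only:) simp
  qed
  then show "S t \<le> S t'" "wa \<in> V \<or> wb \<in> V \<Longrightarrow> S t < S t'" by auto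
qed

text \<open>If the angle sums are \<open>2\<pi>\<close> at every white vertex where \<open>t'\<close> is smaller than \<open>t\<close>, then
  \<open>t \<le> t'\<close> everywhere: summing the angle sums over the set \<open>V\<close> of such vertices and regrouping by
  faces, every face meeting \<open>V\<close> contributes strictly more for \<open>t'\<close> than for \<open>t\<close>.\<close>

lemma angle_sum_maximum_principle:
  fixes t t' :: "'v \<Rightarrow> real"
  assumes bq: "b_quad_graph F K" and adm: "admissible F K al"
    and t: "\<And>w. w \<in> white_verts F K \<Longrightarrow> 0 < t w \<and> t w < 1 \<and> 0 < t' w \<and> t' w < 1"
    and sums: "\<And>w. w \<in> white_verts F K \<Longrightarrow> t' w < t w \<Longrightarrow>
      hyp_angle_sum F K al t w = 2 * pi \<and> hyp_angle_sum F K al t' w = 2 * pi"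
  shows "\<forall>w\<in>white_verts F K. t w \<le> t' w"
proof (rule ccontr)
  assume "\<not> ?thesis"
  then obtain w0 where w0: "w0 \<in> white_verts F K" "t' w0 < t w0" by force
  define V where "V = {w \<in> white_verts F K. t' w < t w}"
  define g where "g t w f = 2 * half_kite_angle (t w) (t (opp_white K f w)) (al f)" for t :: "'v \<Rightarrow> real" and w f
  define R where "R w f \<longleftrightarrow> K f ! 0 = w \<or> K f ! 2 = w" for w f
  have fin: "finite V" "finite F"
    unfolding V_def using finite_white_verts[OF bq] b_quad_graphD(1)[OF bq] by auto
  have swap: "(\<Sum>w\<in>V. hyp_angle_sum F K al t w) = (\<Sum>f\<in>F. \<Sum>w\<in>{w\<in>V. R w f}. g t w f)" for t
    unfolding hyp_angle_sum_def white_star_def g_def R_def[symmetric] by (rule sum.swap_restrict[OF fin])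
  have face: "(\<Sum>w\<in>{w\<in>V. R w f}. g t w f) \<le> (\<Sum>w\<in>{w\<in>V. R w f}. g t' w f)"
    "K f ! 0 \<in> V \<or> K f ! 2 \<in> V \<Longrightarrow> (\<Sum>w\<in>{w\<in>V. R w f}. g t w f) < (\<Sum>w\<in>{w\<in>V. R w f}. g t' w f)"
    if f: "f \<in> F" for f
  proof -
    have corners: "K f ! 0 \<in> white_verts F K" "K f ! 2 \<in> white_verts F K" using corners_white_black[OF f] by auto
    have "0 < al f" "al f < pi" using adm f unfolding admissible_def by auto
    moreover have "\<And>w. w \<in> {K f ! 0, K f ! 2} \<Longrightarrow> 0 < t w \<and> t w < 1 \<and> 0 < t' w \<and> t' w < 1"
      using t corners by auto
    moreover have "\<And>w. w \<in> {K f ! 0, K f ! 2} \<Longrightarrow> w \<in> V \<Longrightarrow> t' w < t w"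
      "\<And>w. w \<in> {K f ! 0, K f ! 2} \<Longrightarrow> w \<notin> V \<Longrightarrow> t w \<le> t' w"
      unfolding V_def using corners by auto
    ultimately show "(\<Sum>w\<in>{w\<in>V. R w f}. g t w f) \<le> (\<Sum>w\<in>{w\<in>V. R w f}. g t' w f)"
      "K f ! 0 \<in> V \<or> K f ! 2 \<in> V \<Longrightarrow> (\<Sum>w\<in>{w\<in>V. R w f}. g t w f) < (\<Sum>w\<in>{w\<in>V. R w f}. g t' w f)"
      using face_angle_sum_le[OF white_corners_distinct[OF bq f], of t t' "al f" V]
      unfolding g_def R_def opp_white_def by blast+
  qed
  obtain f0 where "f0 \<in> F" "K f0 ! 0 = w0 \<or> K f0 ! 2 = w0" using w0(1) unfolding white_verts_def by auto
  moreover have "w0 \<in> V" unfolding V_def using w0 by simp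
  ultimately have "(\<Sum>f\<in>F. \<Sum>w\<in>{w\<in>V. R w f}. g t w f) < (\<Sum>f\<in>F. \<Sum>w\<in>{w\<in>V. R w f}. g t' w f)"
    using face by (intro sum_strict_mono_ex1[OF fin(2)]) auto
  moreover have "(\<Sum>w\<in>V. hyp_angle_sum F K al t w) = (\<Sum>w\<in>V. hyp_angle_sum F K al t' w)"
    using sums unfolding V_def by simp
  ultimately show False unfolding swap by simp
qed

lemma artanh_le_iff:
  fixes x y :: real
  assumes "-1 < x" "x < 1" "-1 < y" "y < 1"
  shows "artanh x \<le> artanh y \<longleftrightarrow> x \<le> y"
  using artanh_less[of x y] artanh_less[of y x] assms by (smt (verit))

lemma white_vert_interior:
  assumes "b_quad_graph F K" "w \<in> white_verts F K" "w \<notin> boundary_verts F K"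
  shows "w \<in> interior_verts F K"
proof -
  obtain f where f: "f \<in> F" "K f ! 0 = w \<or> K f ! 2 = w" using assms(2) unfolding white_verts_def by auto
  then have "w \<in> set (K f)" using b_quad_graphD(2)[OF assms(1) f(1)] nth_mem[of 0 "K f"] nth_mem[of 2 "K f"] by auto
  then show ?thesis unfolding interior_verts_def using f(1) assms(3) by blast
qed

theorem lemma3p1:
  fixes F :: "'f set" and K :: "'f \<Rightarrow> 'v list" and \<alpha> :: "'f \<Rightarrow> real"
    and c c' :: "'v \<Rightarrow> complex" and r r' :: "'v \<Rightarrow> real" and p p' :: "'v \<Rightarrow> complex"
  assumes "b_quad_graph F K"
    and "admissible F K \<alpha>"
    and "circle_pattern F K \<alpha> c r p"
    and "circle_pattern F K \<alpha> c' r' p'"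
    and "\<forall>w\<in>white_verts F K. {z. cmod (z - c w) = r w} \<subseteq> {z. cmod z < 1}"
    and "\<forall>w\<in>white_verts F K. {z. cmod (z - c' w) = r' w} \<subseteq> {z. cmod z < 1}"
    and "\<forall>w\<in>white_verts F K \<inter> boundary_verts F K. hyp_radius (c' w) (r' w) \<ge> hyp_radius (c w) (r w)"
  shows "\<forall>w\<in>white_verts F K. hyp_radius (c' w) (r' w) \<ge> hyp_radius (c w) (r w)"
proof -
  note bq = assms(1) and adm = assms(2) and cp = assms(3) and cp' = assms(4)
  define t t' where "t w = centred_radius (c w) (r w)" and "t' w = centred_radius (c' w) (r' w)" for w
  have r: "0 < r w" "0 < r' w" if "w \<in> white_verts F K" for w
    using circle_pattern_radius_pos[OF cp that] circle_pattern_radius_pos[OF cp' that] by auto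
  have disc: "cmod (c w) + r w < 1" "cmod (c' w) + r' w < 1" if "w \<in> white_verts F K" for w
    using circle_subset_disc_bound[OF r(1)[OF that]] circle_subset_disc_bound[OF r(2)[OF that]]
      assms(5,6) that by auto
  have t: "0 < t w \<and> t w < 1 \<and> 0 < t' w \<and> t' w < 1" if "w \<in> white_verts F K" for w
    using centred_radius_bounds[OF disc(1) r(1), OF that that] centred_radius_bounds[OF disc(2) r(2), OF that that]
    unfolding t_def t'_def by auto
  have hyp: "hyp_radius (c w) (r w) \<le> hyp_radius (c' w) (r' w) \<longleftrightarrow> t w \<le> t' w" if "w \<in> white_verts F K" for w
    using hyp_radius_eq[OF disc(1) r(1), OF that that] hyp_radius_eq[OF disc(2) r(2), OF that that]
      artanh_le_iff[of "t w" "t' w"] t[OF that] unfolding t_def t'_def by simp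
  have sums: "hyp_angle_sum F K \<alpha> t w = 2 * pi \<and> hyp_angle_sum F K \<alpha> t' w = 2 * pi"
    if w: "w \<in> white_verts F K" "t' w < t w" for w
  proof -
    have "w \<in> interior_verts F K" using white_vert_interior[OF bq w(1)] assms(7) hyp w by force
    then show ?thesis
      using circle_pattern_hyp_angle_sum[OF bq adm cp _ w(1)] circle_pattern_hyp_angle_sum[OF bq adm cp' _ w(1)]
        disc unfolding t_def t'_def by blast
  qed
  have "\<forall>w\<in>white_verts F K. t w \<le> t' w" by (rule angle_sum_maximum_principle[OF bq adm t sums])
  then show ?thesis using hyp by simp
qed

end
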